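(* Let $(\mathcal{A},\mathbf{m})$ be a multiarrangement in $\mathbb{Q}^l$ with $\mathcal{A}=\{H_1,\dots,H_n\}$, $H_i=\alpha_i^{-1}(0)$, where the $\alpha_i\in S_\mathbb{Z}=\mathbb{Z}[x_1,\dots,x_l]$ are linear forms such that no prime number divides any $\alpha_i$. Let $p$ be a good prime for $(\mathcal{A},\mathbf{m})$ that is not a zero divisor of $\operatorname{coker}(\varphi_\mathbb{Z})$. If $(\mathcal{A}_p,\mathbf{m})$ is free in $\mathbb{F}_p^l$ with exponents $(e_1,\dots,e_l)$, then $(\mathcal{A},\mathbf{m})$ is free in $\mathbb{Q}^l$ with exponents $(e_1,\dots,e_l)$.
   Context: For a field $\mathbb{K}$ and $R=\mathbb{K}[x_1,\dots,x_l]$, a multiarrangement with hyperplanes $\beta_i^{-1}(0)$ and multiplicities $\mathbf{m}_i\ge0$ has $D=\{\delta=\sum_j f_j\partial_{x_j}: f_j\in R,\ \delta(\beta_i)\in\beta_i^{\mathbf{m}_i}R\ \forall i\}$; it is free with exponents $(e_1,\dots,e_l)$ if $D$ is a free $R$-module with a basis of homogeneous derivations of polynomial degrees $e_1,\dots,e_l$. Let $\pi_p\colon S_\mathbb{Z}\to\mathbb{F}_p[x_1,\dots,x_l]$ be reduction mod $p$. A prime $p$ is good if $\pi_p(\alpha_i)\ne\pi_p(\alpha_j)$ for $i\ne j$; then $(\mathcal{A}_p,\mathbf{m})$ is the multiarrangement in $\mathbb{F}_p^l$ with hyperplanes $\pi_p(\alpha_i)^{-1}(0)$ of multiplicities $\mathbf{m}(H_i)$.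 Let $M(\mathcal{A},\mathbf{m})\subseteq S_\mathbb{Z}^n$ be generated by $\alpha_i^{\mathbf{m}(H_i)}e_i$, $A(\mathcal{A})=(\partial\alpha_i/\partial x_j)_{i,j}$, and $\varphi_\mathbb{Z}\colon S_\mathbb{Z}^l\to S_\mathbb{Z}^n/M(\mathcal{A},\mathbf{m})$, $g\mapsto A(\mathcal{A})g$. $p$ is a zero divisor of an $S_\mathbb{Z}$-module $N$ if $pv=0$ for some nonzero $v\in N$. *)

theory Defs
  imports "HOL-Library.Poly_Mapping" "Berlekamp_Zassenhaus.Finite_Field"
begin

text \<open>The polynomial ring
  K[x_1,...,x_l] is the subset of those polynomials that only involve variables
  with index < l (variable x_(j+1) is indexed j).\<close>

type_synonym 'k mpoly = "((nat, nat) poly_mapping, 'k) poly_mapping"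

definition mpoly_in :: "nat \<Rightarrow> 'k::zero mpoly \<Rightarrow> bool" where
  "mpoly_in l f \<longleftrightarrow> (\<forall>mm\<in>Poly_Mapping.keys f. \<forall>j\<in>Poly_Mapping.keys mm. j < l)"

definition mconst :: "'k::zero \<Rightarrow> 'k mpoly" where
  "mconst c = Poly_Mapping.single 0 c"

definition mdeg :: "(nat \<Rightarrow>\<^sub>0 nat) \<Rightarrow> nat" where
  "mdeg mm = (\<Sum>j\<in>Poly_Mapping.keys mm. Poly_Mapping.lookup mm j)"

text \<open>The linear form sum_(k<l) c_k x_k with integer coefficients c, viewed in 'k[x]
  via the canonical map Z -> 'k (for 'k = F_p this is reduction mod p).\<close>
definition lin_form :: "nat \<Rightarrow> (nat \<Rightarrow> int) \<Rightarrow> 'k::comm_ring_1 mpoly" where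
  "lin_form l c = (\<Sum>k<l. Poly_Mapping.single (Poly_Mapping.single k 1) (of_int (c k)))"

text \<open>A derivation sum_j f_j d/dx_j on K[x_1..x_l], given by its coefficient tuple.\<close>
definition is_der :: "nat \<Rightarrow> (nat \<Rightarrow> 'k::zero mpoly) \<Rightarrow> bool" where
  "is_der l \<delta> \<longleftrightarrow> (\<forall>j<l. mpoly_in l (\<delta> j)) \<and> (\<forall>j\<ge>l. \<delta> j = 0)"

definition der_apply :: "nat \<Rightarrow> (nat \<Rightarrow> 'k::comm_ring_1 mpoly) \<Rightarrow> (nat \<Rightarrow> int) \<Rightarrow> 'k mpoly" where
  "der_apply l \<delta> c = (\<Sum>j<l. mconst (of_int (c j)) * \<delta> j)"

text \<open>The module D(A,m) of logarithmic derivations of the multiarrangement with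
  hyperplanes given by the linear forms alpha_i (coefficients a i), i < n, multiplicities m i.\<close>
definition Dmod :: "nat \<Rightarrow> nat \<Rightarrow> (nat \<Rightarrow> nat \<Rightarrow> int) \<Rightarrow> (nat \<Rightarrow> nat)
    \<Rightarrow> (nat \<Rightarrow> 'k::comm_ring_1 mpoly) set" where
  "Dmod l n a m = {\<delta>. is_der l \<delta> \<and>
     (\<forall>i<n. \<exists>q. mpoly_in l q \<and> der_apply l \<delta> (a i) = lin_form l (a i) ^ m i * q)}"

definition homog_der :: "nat \<Rightarrow> (nat \<Rightarrow> 'k::zero mpoly) \<Rightarrow> bool" where
  "homog_der d \<delta> \<longleftrightarrow> (\<forall>j. \<forall>mm\<in>Poly_Mapping.keys (\<delta> j). mdeg mm = d)"

definition free_with_exponents :: "nat \<Rightarrow> (nat \<Rightarrow> 'k::comm_ring_1 mpoly) set \<Rightarrow> (nat \<Rightarrow> nat) \<Rightarrow> bool" where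
  "free_with_exponents l D e \<longleftrightarrow>
     (\<exists>B :: nat \<Rightarrow> nat \<Rightarrow> 'k mpoly.
        (\<forall>s<l. B s \<in> D \<and> homog_der (e s) (B s)) \<and>
        (\<forall>\<delta>\<in>D. \<exists>!g. (\<forall>s<l. mpoly_in l (g s)) \<and> (\<forall>s\<ge>l. g s = 0) \<and>
                       \<delta> = (\<lambda>j. \<Sum>s<l. g s * B s j)))"

text \<open>Membership of v in S_Z^n in the submodule M(A,m) + image(A(A)), i.e. v is zero
  in coker(phi_Z) = S_Z^n / (M(A,m) + A(A) S_Z^l).\<close>
definition in_M_plus_image :: "nat \<Rightarrow> nat \<Rightarrow> (nat \<Rightarrow> nat \<Rightarrow> int) \<Rightarrow> (nat \<Rightarrow> nat)
    \<Rightarrow> (nat \<Rightarrow> int mpoly) \<Rightarrow> bool" where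
  "in_M_plus_image l n a m v \<longleftrightarrow>
     (\<exists>g q. (\<forall>j<l. mpoly_in l (g j)) \<and>
        (\<forall>i<n. mpoly_in l (q i) \<and>
           v i = (\<Sum>j<l. mconst (a i j) * g j) + lin_form l (a i) ^ m i * q i))"

definition coker_zero_divisor :: "nat \<Rightarrow> nat \<Rightarrow> (nat \<Rightarrow> nat \<Rightarrow> int) \<Rightarrow> (nat \<Rightarrow> nat) \<Rightarrow> int \<Rightarrow> bool" where
  "coker_zero_divisor l n a m p \<longleftrightarrow>
     (\<exists>v. (\<forall>i<n. mpoly_in l (v i)) \<and> \<not> in_M_plus_image l n a m v \<and>
          in_M_plus_image l n a m (\<lambda>i. mconst p * v i))"

text \<open>The hyperplane alpha^(-1)(0) in Q^l (vectors: functions vanishing at indices >= l).\<close>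
definition hyperplane_Q :: "nat \<Rightarrow> (nat \<Rightarrow> int) \<Rightarrow> (nat \<Rightarrow> rat) set" where
  "hyperplane_Q l c = {x. (\<forall>k\<ge>l. x k = 0) \<and> (\<Sum>k<l. of_int (c k) * x k) = 0}"

end

(* Lift the F_p-basis B_1, ..., B_l of D(A_p, m) to homogeneous integral derivations
   theta_1, ..., theta_l in D(A, m) of the same degrees.  Lifting is possible because the
   obstruction to lifting a derivation modulo p is an element p w that vanishes in coker(phi_Z);
   as p is not a zero divisor there, w vanishes too, and subtracting p times a preimage of w
   repairs the naive lift.

   For a homogeneous integral delta in D(A, m), expanding delta mod p in the basis
   and dividing the difference by p (possible since no alpha_i vanishes mod p) gives
   delta = sum g_s theta_s + p delta' with delta' of the same kind.  Iterating, the coefficient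
   vector of delta differs from the Q-span of the theta_s by p^k times an integral vector supported
   in a fixed finite set, for every k.  A rational linear functional vanishing on the span has
   bounded denominators on such vectors, so delta lies in the span.  Clearing denominators
   extends this to all of D(A, m) over Q.

   Independence.  An integral relation sum H_s theta_s = 0 reduces mod p to a relation between
   the B_s, so all H_s are divisible by p, hence by every power of p, hence zero. *)

theory Submission
  imports Defs "HOL-Library.Function_Algebras"
begin

section \<open>Rational subspaces are closed under p-adic approximation\<close>

definition scale_fun :: "rat \<Rightarrow> ('c \<Rightarrow> rat) \<Rightarrow> 'c \<Rightarrow> rat" where
  "scale_fun c v = (\<lambda>x. c * v x)"

interpretation rat_fun: vector_space_pair "scale_fun :: rat \<Rightarrow> ('c \<Rightarrow> rat) \<Rightarrow> _" "(*) :: rat \<Rightarrow> rat \<Rightarrow> rat"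
  by unfold_locales (auto simp: scale_fun_def algebra_simps)

lemma sum_fun_apply: "(\<Sum>i\<in>I. F i) x = (\<Sum>i\<in>I. F i x :: 'b::comm_monoid_add)"
  by (induct I rule: infinite_finite_induct) auto

lemma rat_common_denominator:
  fixes r :: "'i \<Rightarrow> rat"
  assumes "finite I"
  shows "\<exists>N::int. N > 0 \<and> (\<forall>i\<in>I. of_int N * r i \<in> \<int>)"
proof -
  define b where "b i = snd (quotient_of (r i))" for i
  have b_pos: "b i > 0" for i
    by (simp add: b_def quotient_of_denom_pos')
  have b_int: "of_int (b i) * r i \<in> \<int>" for i
  proof -
    obtain a where "quotient_of (r i) = (a, b i)"
      by (cases "quotient_of (r i)") (simp add: b_def)
    then have "r i = of_int a / of_int (b i)"
      by (rule quotient_of_div)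
    then show ?thesis
      using b_pos[of i] by simp
  qed
  have "of_int (\<Prod>i\<in>I. b i) * r i \<in> \<int>" if "i \<in> I" for i
  proof -
    have "(\<Prod>i\<in>I. b i) = b i * (\<Prod>j\<in>I - {i}. b j)"
      using assms that by (rule prod.remove)
    then have "of_int (\<Prod>i\<in>I. b i) * r i = of_int (\<Prod>j\<in>I - {i}. b j) * (of_int (b i) * r i)"
      by (simp only: of_int_mult mult_ac)
    also have "\<dots> \<in> \<int>"
      by (rule Ints_mult[OF Ints_of_int b_int])
    finally show ?thesis .
  qed
  moreover have "(\<Prod>i\<in>I. b i) > 0"
    using b_pos by (simp add: prod_pos)
  ultimately show ?thesis
    by blast
qed

lemma zero_if_dvd_all_powers:
  fixes P c :: int
  assumes "P \<ge> 2" and "\<And>k. P ^ k dvd c"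
  shows "c = 0"
proof (rule ccontr)
  assume "c \<noteq> 0"
  let ?k = "nat \<bar>c\<bar>"
  have "\<bar>P ^ ?k\<bar> \<le> \<bar>c\<bar>"
    using dvd_imp_le_int[OF \<open>c \<noteq> 0\<close> assms(2)] .
  moreover have "int ?k < int (2 ^ ?k)"
    using less_exp[of ?k] by (simp only: of_nat_less_iff)
  moreover have "(2::int) ^ ?k \<le> P ^ ?k"
    using assms(1) by (simp add: power_mono)
  ultimately show False
    by simp
qed

lemma separating_linear_functional:
  assumes S: "rat_fun.vs1.subspace S" and "v \<notin> S"
  shows "\<exists>g. Vector_Spaces.linear scale_fun (*) g \<and> g v = 1 \<and> (\<forall>x\<in>S. g x = 0)"
proof -
  obtain B where B: "B \<subseteq> S" "rat_fun.vs1.independent B" "S \<subseteq> rat_fun.vs1.span B"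
    by (rule rat_fun.vs1.maximal_independent_subset)
  have span_B: "rat_fun.vs1.span B = S"
    using B S by (intro rat_fun.vs1.span_subspace) auto
  have indep: "rat_fun.vs1.independent (insert v B)"
    using B(2) \<open>v \<notin> S\<close> span_B by (simp add: rat_fun.vs1.independent_insert)
  obtain g where g: "Vector_Spaces.linear scale_fun (*) g"
    and g_on: "\<forall>x\<in>insert v B. g x = (if x = v then 1 else 0)"
    using rat_fun.linear_independent_extend[OF indep, of "\<lambda>x. if x = v then 1 else 0"] by blast
  have "g x = 0" if "x \<in> S" for x
  proof (rule rat_fun.linear_eq_0_on_span[OF g])
    show "x \<in> rat_fun.vs1.span B"
      using that span_B by simp
    show "g b = 0" if "b \<in> B" for b
      using that g_on \<open>v \<notin> S\<close> B(1) by auto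
  qed
  with g g_on show ?thesis
    by auto
qed

lemma linear_functional_common_denominator:
  fixes g :: "('c \<Rightarrow> rat) \<Rightarrow> rat"
  assumes g: "Vector_Spaces.linear scale_fun (*) g" and "finite I"
  shows "\<exists>N::int. N > 0 \<and>
    (\<forall>\<epsilon>. (\<forall>x. \<epsilon> x \<in> \<int>) \<longrightarrow> (\<forall>x. x \<notin> I \<longrightarrow> \<epsilon> x = 0) \<longrightarrow> of_int N * g \<epsilon> \<in> \<int>)"
proof -
  define unit :: "'c \<Rightarrow> 'c \<Rightarrow> rat" where "unit i = (\<lambda>x. if x = i then 1 else 0)" for i
  obtain N where "N > 0" and N: "\<forall>i\<in>I. of_int N * g (unit i) \<in> \<int>"
    using rat_common_denominator[OF \<open>finite I\<close>, of "\<lambda>i. g (unit i)"] by blast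
  have "of_int N * g \<epsilon> \<in> \<int>" if \<epsilon>_int: "\<forall>x. \<epsilon> x \<in> \<int>" and \<epsilon>_I: "\<forall>x. x \<notin> I \<longrightarrow> \<epsilon> x = 0" for \<epsilon>
  proof -
    have decomp: "\<epsilon> = (\<Sum>i\<in>I. scale_fun (\<epsilon> i) (unit i))"
    proof
      fix x
      have "(\<Sum>i\<in>I. scale_fun (\<epsilon> i) (unit i)) x = (\<Sum>i\<in>I. if x = i then \<epsilon> i else 0)"
        by (simp add: sum_fun_apply scale_fun_def unit_def) (rule sum.cong, auto)
      also have "\<dots> = \<epsilon> x"
        using \<epsilon>_I \<open>finite I\<close> by (simp add: sum.delta)
      finally show "\<epsilon> x = (\<Sum>i\<in>I. scale_fun (\<epsilon> i) (unit i)) x" ..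
    qed
    have g\<epsilon>: "g \<epsilon> = (\<Sum>i\<in>I. \<epsilon> i * g (unit i))"
      by (subst decomp) (simp add: rat_fun.linear_sum[OF g] rat_fun.linear_scale[OF g])
    have "of_int N * g \<epsilon> = (\<Sum>i\<in>I. \<epsilon> i * (of_int N * g (unit i)))"
      unfolding g\<epsilon> sum_distrib_left by (intro sum.cong refl) (rule mult.left_commute)
    also have "\<dots> \<in> \<int>"
      using \<epsilon>_int N by (intro Ints_sum) (blast intro: Ints_mult)
    finally show ?thesis .
  qed
  with \<open>N > 0\<close> show ?thesis
    by blast
qed

lemma padic_limit_in_subspace:
  fixes S :: "('c \<Rightarrow> rat) set" and P :: int
  assumes S: "rat_fun.vs1.subspace S" and "finite I" and "P \<ge> 2"
    and approx: "\<And>k. \<exists>w\<in>S. \<exists>\<epsilon>. (\<forall>x. \<epsilon> x \<in> \<int>) \<and> (\<forall>x. x \<notin> I \<longrightarrow> \<epsilon> x = 0) \<and>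
                        v = w + scale_fun (of_int (P ^ k)) \<epsilon>"
  shows "v \<in> S"
proof (rule ccontr)
  assume "v \<notin> S"
  then obtain g where g: "Vector_Spaces.linear scale_fun (*) g" and "g v = 1" and g_S: "\<forall>x\<in>S. g x = 0"
    using separating_linear_functional[OF S] by blast
  then obtain N :: int where "N > 0" and N: "\<forall>\<epsilon>. (\<forall>x. \<epsilon> x \<in> \<int>) \<longrightarrow> (\<forall>x. x \<notin> I \<longrightarrow> \<epsilon> x = 0) \<longrightarrow>
      of_int N * g \<epsilon> \<in> \<int>"
    using linear_functional_common_denominator[OF g \<open>finite I\<close>] by blast
  have dvd_N: "P ^ k dvd N" for k
  proof -
    obtain w \<epsilon> where "w \<in> S" and \<epsilon>: "\<forall>x. \<epsilon> x \<in> \<int>" "\<forall>x. x \<notin> I \<longrightarrow> \<epsilon> x = 0"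
      and v: "v = w + scale_fun (of_int (P ^ k)) \<epsilon>"
      using approx by blast
    have "of_int N * g \<epsilon> \<in> \<int>"
      using N \<epsilon> by blast
    then obtain z where z: "of_int N * g \<epsilon> = of_int z"
      by (rule Ints_cases)
    have "of_int (P ^ k) * g \<epsilon> = 1"
      using \<open>g v = 1\<close> \<open>w \<in> S\<close> g_S unfolding v
      by (simp add: rat_fun.linear_add[OF g] rat_fun.linear_scale[OF g])
    then have "of_int N = of_int N * (of_int (P ^ k) * g \<epsilon>)"
      by simp
    also have "\<dots> = of_int (P ^ k) * (of_int N * g \<epsilon>)"
      by (rule mult.left_commute)
    finally have "(of_int N :: rat) = of_int (P ^ k * z)"
      by (simp add: z)
    then have "N = P ^ k * z"
      by (simp only: of_int_eq_iff)
    then show ?thesis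
      by simp
  qed
  have "N = 0"
    using \<open>P \<ge> 2\<close> dvd_N by (rule zero_if_dvd_all_powers)
  with \<open>N > 0\<close> show False
    by simp
qed

section \<open>Degrees, homogeneous components and variables of polynomials\<close>

lemma mdeg_superset:
  assumes "finite S" "Poly_Mapping.keys mm \<subseteq> S"
  shows "mdeg mm = (\<Sum>j\<in>S. Poly_Mapping.lookup mm j)"
  unfolding mdeg_def using assms
  by (intro sum.mono_neutral_left) (auto simp: in_keys_iff)

lemma mdeg_add: "mdeg (u + v) = mdeg u + mdeg v"
proof -
  let ?S = "Poly_Mapping.keys u \<union> Poly_Mapping.keys v"
  have "mdeg (u + v) = (\<Sum>j\<in>?S. Poly_Mapping.lookup (u + v) j)"
    using keys_add[of u v] by (intro mdeg_superset) auto
  also have "\<dots> = (\<Sum>j\<in>?S. Poly_Mapping.lookup u j) + (\<Sum>j\<in>?S. Poly_Mapping.lookup v j)"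
    by (simp add: lookup_add sum.distrib)
  also have "\<dots> = mdeg u + mdeg v"
    by (subst (1 2) mdeg_superset[where S = ?S]) auto
  finally show ?thesis .
qed

lemma mdeg_zero [simp]: "mdeg 0 = 0"
  by (simp add: mdeg_def)

lemma mdeg_single [simp]: "mdeg (Poly_Mapping.single k n) = n"
  by (simp add: mdeg_def)

lemma lookup_le_mdeg: "Poly_Mapping.lookup mm j \<le> mdeg mm"
  by (cases "j \<in> Poly_Mapping.keys mm") (auto simp: mdeg_def in_keys_iff intro: member_le_sum)

definition monoms :: "nat \<Rightarrow> nat \<Rightarrow> (nat \<Rightarrow>\<^sub>0 nat) set" where
  "monoms l d = {u. Poly_Mapping.keys u \<subseteq> {..<l} \<and> mdeg u = d}"

lemma finite_monoms: "finite (monoms l d)"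
proof -
  let ?F = "{f. \<forall>x. (x \<in> {..<l} \<longrightarrow> f x \<in> {0..d}) \<and> (x \<notin> {..<l} \<longrightarrow> f x = (0::nat))}"
  have "Poly_Mapping.lookup ` monoms l d \<subseteq> ?F"
  proof
    fix f
    assume "f \<in> Poly_Mapping.lookup ` monoms l d"
    then obtain u where u: "u \<in> monoms l d" "f = Poly_Mapping.lookup u"
      by blast
    then have "f x \<in> {0..d}" for x
      using lookup_le_mdeg[of u x] by (simp add: monoms_def)
    moreover have "f x = 0" if "x \<notin> {..<l}" for x
      using u that unfolding monoms_def by (auto simp: in_keys_iff)
    ultimately show "f \<in> ?F"
      by blast
  qed
  moreover have "finite ?F"
    by (intro finite_set_of_finite_funs) auto
  ultimately have "finite (Poly_Mapping.lookup ` monoms l d)"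
    by (rule finite_subset)
  moreover have "inj_on Poly_Mapping.lookup (monoms l d)"
    by (intro inj_onI) (simp add: poly_mapping.lookup_inject)
  ultimately show ?thesis
    by (rule finite_imageD)
qed

lemma lookup_map_zero:
  "h 0 = 0 \<Longrightarrow> Poly_Mapping.lookup (Poly_Mapping.map h f) k = h (Poly_Mapping.lookup f k)"
  by (simp add: map.rep_eq when_def)

lemma keys_map_subset: "Poly_Mapping.keys (Poly_Mapping.map h f) \<subseteq> Poly_Mapping.keys f"
  by (auto simp: in_keys_iff map.rep_eq when_def)

lemma lookup_mconst_mult: "Poly_Mapping.lookup (mconst c * f) k = c * Poly_Mapping.lookup f k"
  unfolding mconst_def mult_map_scale_conv_mult[symmetric] by (simp add: lookup_map_zero)

lemma mconst_mult: "mconst (a * b) = mconst a * mconst (b :: 'a::comm_semiring_1)"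
  by (simp add: mconst_def mult_single)

lemma mconst_1 [simp]: "mconst 1 = 1"
  by (simp add: mconst_def)

lemma mconst_eq_0_iff [simp]: "mconst c = 0 \<longleftrightarrow> c = 0"
  unfolding mconst_def by (metis lookup_single_eq single_zero)

lemma poly_mapping_sum_single:
  assumes "finite U" "Poly_Mapping.keys f \<subseteq> U"
  shows "f = (\<Sum>u\<in>U. Poly_Mapping.single u (Poly_Mapping.lookup f u))"
proof (rule poly_mapping_eqI)
  fix k
  have "Poly_Mapping.lookup (\<Sum>u\<in>U. Poly_Mapping.single u (Poly_Mapping.lookup f u)) k
      = (\<Sum>u\<in>U. if u = k then Poly_Mapping.lookup f u else 0)"
    by (simp add: lookup_sum lookup_single when_def)
  also have "\<dots> = Poly_Mapping.lookup f k"
    using assms by (auto simp: sum.delta in_keys_iff)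
  finally show "Poly_Mapping.lookup f k =
      Poly_Mapping.lookup (\<Sum>u\<in>U. Poly_Mapping.single u (Poly_Mapping.lookup f u)) k" ..
qed

definition homog :: "nat \<Rightarrow> 'k::zero mpoly \<Rightarrow> bool" where
  "homog d f \<longleftrightarrow> (\<forall>mm\<in>Poly_Mapping.keys f. mdeg mm = d)"

lemma homog_der_iff: "homog_der d \<delta> \<longleftrightarrow> (\<forall>j. homog d (\<delta> j))"
  by (simp add: homog_der_def homog_def)

definition hc :: "nat \<Rightarrow> 'k::zero mpoly \<Rightarrow> 'k mpoly" where
  "hc d f = Abs_poly_mapping (\<lambda>mm. if mdeg mm = d then Poly_Mapping.lookup f mm else 0)"

lemma lookup_hc:
  "Poly_Mapping.lookup (hc d f) mm = (if mdeg mm = d then Poly_Mapping.lookup f mm else 0)"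
proof -
  have "{mm. (if mdeg mm = d then Poly_Mapping.lookup f mm else 0) \<noteq> 0} \<subseteq> Poly_Mapping.keys f"
    by (auto simp: in_keys_iff split: if_splits)
  then show ?thesis
    unfolding hc_def by (subst lookup_Abs_poly_mapping) (auto intro: finite_subset)
qed

lemma keys_hc: "Poly_Mapping.keys (hc d f) \<subseteq> Poly_Mapping.keys f"
  by (auto simp: in_keys_iff lookup_hc split: if_splits)

lemma homog_hc: "homog d (hc d f)"
  by (auto simp: homog_def in_keys_iff lookup_hc split: if_splits)

lemma hc_homog: "homog d f \<Longrightarrow> hc d f = f"
  by (rule poly_mapping_eqI) (auto simp: lookup_hc homog_def in_keys_iff)

lemma hc_eq_0: "(\<And>mm. mm \<in> Poly_Mapping.keys f \<Longrightarrow> mdeg mm \<noteq> d) \<Longrightarrow> hc d f = 0"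
  by (rule poly_mapping_eqI) (auto simp: lookup_hc in_keys_iff)

lemma hc_add: "hc d (f + g) = hc d f + hc d (g :: 'k::monoid_add mpoly)"
  by (rule poly_mapping_eqI) (simp add: lookup_hc lookup_add)

lemma hc_zero [simp]: "hc d 0 = 0"
  by (rule poly_mapping_eqI) (simp add: lookup_hc)

lemma hc_sum: "hc d (\<Sum>x\<in>A. f x) = (\<Sum>x\<in>A. hc d (f x :: 'k::comm_monoid_add mpoly))"
  by (induct A rule: infinite_finite_induct) (auto simp: hc_add)

lemma sum_hc:
  assumes "finite D" "mdeg ` Poly_Mapping.keys f \<subseteq> D"
  shows "(\<Sum>d\<in>D. hc d f) = f"
proof (rule poly_mapping_eqI)
  fix mm
  have "Poly_Mapping.lookup (\<Sum>d\<in>D. hc d f) mm = (if mdeg mm \<in> D then Poly_Mapping.lookup f mm else 0)"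
    using assms(1) by (simp add: lookup_sum lookup_hc sum.delta)
  also have "\<dots> = Poly_Mapping.lookup f mm"
    using assms(2) by (cases "mm \<in> Poly_Mapping.keys f") (auto simp: in_keys_iff)
  finally show "Poly_Mapping.lookup (\<Sum>d\<in>D. hc d f) mm = Poly_Mapping.lookup f mm" .
qed

lemma homog_0 [simp]: "homog d 0"
  by (simp add: homog_def)

lemma homog_mconst: "homog 0 (mconst c)"
  by (simp add: homog_def mconst_def)

lemma homog_add: "homog d f \<Longrightarrow> homog d g \<Longrightarrow> homog d (f + g)"
  using keys_add[of f g] by (auto simp: homog_def)

lemma homog_sum:
  "(\<And>x. x \<in> A \<Longrightarrow> homog d (f x)) \<Longrightarrow> homog d (\<Sum>x\<in>A. f x :: 'k::comm_monoid_add mpoly)"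
  by (induct A rule: infinite_finite_induct) (auto intro: homog_add)

lemma keys_mult_mdeg:
  assumes "mm \<in> Poly_Mapping.keys (f * g)"
  obtains u v where "u \<in> Poly_Mapping.keys f" "v \<in> Poly_Mapping.keys g" "mdeg mm = mdeg u + mdeg v"
  using assms keys_mult[of f g] mdeg_add by blast

lemma homog_mult:
  assumes "homog a f" "homog b g"
  shows "homog (a + b) (f * (g :: 'k::semiring_0 mpoly))"
  unfolding homog_def
proof
  fix mm
  assume "mm \<in> Poly_Mapping.keys (f * g)"
  then obtain u v where "u \<in> Poly_Mapping.keys f" "v \<in> Poly_Mapping.keys g" "mdeg mm = mdeg u + mdeg v"
    by (rule keys_mult_mdeg)
  then show "mdeg mm = a + b"
    using assms by (simp add: homog_def)
qed

lemma homog_pow: "homog a f \<Longrightarrow> homog (a * k) (f ^ k :: 'k::comm_semiring_1 mpoly)"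
proof (induct k)
  case 0
  show ?case
    by (simp add: homog_def)
next
  case (Suc k)
  then have "homog (a + a * k) (f * f ^ k)"
    by (intro homog_mult) auto
  then show ?case
    by simp
qed

lemma homog_lin_form: "homog 1 (lin_form l c :: 'k::comm_ring_1 mpoly)"
  unfolding lin_form_def by (intro homog_sum) (simp add: homog_def)

lemma hc_mult_homog_eq_0:
  assumes "homog a f" and "\<And>v. v \<in> Poly_Mapping.keys g \<Longrightarrow> a + mdeg v \<noteq> d"
  shows "hc d (f * g) = (0 :: 'k::semiring_0 mpoly)"
proof (rule hc_eq_0)
  fix mm
  assume "mm \<in> Poly_Mapping.keys (f * g)"
  then obtain u v where "u \<in> Poly_Mapping.keys f" "v \<in> Poly_Mapping.keys g" "mdeg mm = mdeg u + mdeg v"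
    by (rule keys_mult_mdeg)
  then show "mdeg mm \<noteq> d"
    using assms by (auto simp: homog_def)
qed

lemma hc_mult_homog:
  assumes f: "homog a f"
  shows "hc d (f * g) = (if a \<le> d then f * hc (d - a) g else (0 :: 'k::comm_ring_1 mpoly))"
proof (cases "a \<le> d")
  case True
  let ?r = "g - hc (d - a) g"
  have "hc d (f * ?r) = 0"
    using f by (rule hc_mult_homog_eq_0) (use True in \<open>auto simp: in_keys_iff lookup_minus lookup_hc\<close>)
  moreover have "hc d (f * hc (d - a) g) = f * hc (d - a) g"
    using True homog_mult[OF f homog_hc, of "d - a" g] by (intro hc_homog) simp
  moreover have "f * g = f * hc (d - a) g + f * ?r"
    by (simp add: algebra_simps)
  ultimately show ?thesis
    using True by (simp add: hc_add)
next
  case False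
  then show ?thesis
    using hc_mult_homog_eq_0[OF f, of g d] by simp
qed

lemma hc_mult_homog_right:
  "homog a g \<Longrightarrow> hc d (f * g) = (if a \<le> d then hc (d - a) f * g else (0 :: 'k::comm_ring_1 mpoly))"
  using hc_mult_homog[of a g d f] by (simp add: mult.commute)

lemma hc_mconst_mult: "hc d (mconst c * g) = mconst c * hc d (g :: 'k::comm_ring_1 mpoly)"
  using hc_mult_homog[OF homog_mconst, of d c g] by simp

lemma hc_lin_comb:
  assumes "\<And>s. s < l \<Longrightarrow> homog (e s) (B s)"
  shows "hc d (\<Sum>s<l. g s * B s) =
    (\<Sum>s<l. (if e s \<le> d then hc (d - e s) (g s) else 0) * (B s :: 'k::comm_ring_1 mpoly))"
  unfolding hc_sum by (rule sum.cong) (simp_all add: hc_mult_homog_right[OF assms])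

lemma mpoly_in_0 [simp]: "mpoly_in l 0"
  by (simp add: mpoly_in_def)

lemma mpoly_in_subset: "Poly_Mapping.keys g \<subseteq> Poly_Mapping.keys f \<Longrightarrow> mpoly_in l f \<Longrightarrow> mpoly_in l g"
  by (auto simp: mpoly_in_def)

lemma mpoly_in_add: "mpoly_in l f \<Longrightarrow> mpoly_in l g \<Longrightarrow> mpoly_in l (f + g)"
  using keys_add[of f g] by (auto simp: mpoly_in_def)

lemma mpoly_in_uminus: "mpoly_in l f \<Longrightarrow> mpoly_in l (- (f :: 'k::ab_group_add mpoly))"
  by (auto simp: mpoly_in_def)

lemma mpoly_in_diff: "mpoly_in l f \<Longrightarrow> mpoly_in l g \<Longrightarrow> mpoly_in l (f - (g :: 'k::ab_group_add mpoly))"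
  using mpoly_in_add[of l f "- g"] mpoly_in_uminus[of l g] by simp

lemma mpoly_in_sum:
  "(\<And>x. x \<in> A \<Longrightarrow> mpoly_in l (f x)) \<Longrightarrow> mpoly_in l (\<Sum>x\<in>A. f x :: 'k::comm_monoid_add mpoly)"
  by (induct A rule: infinite_finite_induct) (auto intro: mpoly_in_add)

lemma mpoly_in_mult:
  assumes "mpoly_in l f" "mpoly_in l g"
  shows "mpoly_in l (f * (g :: 'k::semiring_0 mpoly))"
  unfolding mpoly_in_def
proof (intro ballI)
  fix mm j
  assume "mm \<in> Poly_Mapping.keys (f * g)" and j: "j \<in> Poly_Mapping.keys mm"
  then obtain u v where "u \<in> Poly_Mapping.keys f" "v \<in> Poly_Mapping.keys g" "mm = u + v"
    using keys_mult[of f g] by blast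
  moreover have "j \<in> Poly_Mapping.keys u \<union> Poly_Mapping.keys v"
    using j keys_add[of u v] calculation(3) by blast
  ultimately show "j < l"
    using assms by (auto simp: mpoly_in_def)
qed

lemma mpoly_in_mconst: "mpoly_in l (mconst c)"
  by (simp add: mpoly_in_def mconst_def)

lemma mpoly_in_pow: "mpoly_in l f \<Longrightarrow> mpoly_in l (f ^ k :: 'k::comm_semiring_1 mpoly)"
  by (induct k) (simp_all add: mpoly_in_mult, simp add: mpoly_in_def)

lemma mpoly_in_lin_form: "mpoly_in l (lin_form l c :: 'k::comm_ring_1 mpoly)"
  unfolding lin_form_def by (intro mpoly_in_sum) (simp add: mpoly_in_def)

lemma mpoly_in_hc: "mpoly_in l f \<Longrightarrow> mpoly_in l (hc d f)"
  using keys_hc by (rule mpoly_in_subset)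

lemma keys_subset_monoms: "mpoly_in l f \<Longrightarrow> homog d f \<Longrightarrow> Poly_Mapping.keys f \<subseteq> monoms l d"
  by (auto simp: mpoly_in_def homog_def monoms_def)

section \<open>Changing the coefficient ring\<close>

definition of_int_mpoly :: "int mpoly \<Rightarrow> 'k::comm_ring_1 mpoly" where
  "of_int_mpoly f = Poly_Mapping.map of_int f"

lemma lookup_of_int_mpoly: "Poly_Mapping.lookup (of_int_mpoly f) k = of_int (Poly_Mapping.lookup f k)"
  unfolding of_int_mpoly_def by (simp add: lookup_map_zero)

lemma keys_of_int_mpoly: "Poly_Mapping.keys (of_int_mpoly f) \<subseteq> Poly_Mapping.keys f"
  unfolding of_int_mpoly_def by (rule keys_map_subset)

lemma of_int_mpoly_add: "of_int_mpoly (f + g) = of_int_mpoly f + of_int_mpoly g"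
  by (rule poly_mapping_eqI) (simp add: lookup_of_int_mpoly lookup_add)

lemma of_int_mpoly_diff: "of_int_mpoly (f - g) = of_int_mpoly f - of_int_mpoly g"
  by (rule poly_mapping_eqI) (simp add: lookup_of_int_mpoly lookup_minus)

lemma of_int_mpoly_0 [simp]: "of_int_mpoly 0 = 0"
  by (rule poly_mapping_eqI) (simp add: lookup_of_int_mpoly)

lemma of_int_mpoly_sum: "of_int_mpoly (\<Sum>x\<in>A. f x) = (\<Sum>x\<in>A. of_int_mpoly (f x))"
  by (induct A rule: infinite_finite_induct) (auto simp: of_int_mpoly_add)

lemma of_int_mpoly_single: "of_int_mpoly (Poly_Mapping.single u c) = Poly_Mapping.single u (of_int c)"
  by (rule poly_mapping_eqI) (simp add: lookup_of_int_mpoly lookup_single when_def)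

lemma of_int_mpoly_mconst: "of_int_mpoly (mconst c) = mconst (of_int c)"
  by (simp add: mconst_def of_int_mpoly_single)

lemma of_int_mpoly_1 [simp]: "of_int_mpoly 1 = 1"
  using of_int_mpoly_single[of 0 1] by simp

lemma of_int_mpoly_expand:
  "of_int_mpoly f = (\<Sum>u\<in>Poly_Mapping.keys f. Poly_Mapping.single u (of_int (Poly_Mapping.lookup f u)))"
proof -
  have "of_int_mpoly f =
      (\<Sum>u\<in>Poly_Mapping.keys f. Poly_Mapping.single u (Poly_Mapping.lookup (of_int_mpoly f) u))"
    by (rule poly_mapping_sum_single) (auto intro: keys_of_int_mpoly[THEN subsetD])
  then show ?thesis
    by (simp add: lookup_of_int_mpoly)
qed

lemma of_int_mpoly_mult: "of_int_mpoly (f * g) = of_int_mpoly f * of_int_mpoly g"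
proof -
  let ?F = "Poly_Mapping.keys f" and ?G = "Poly_Mapping.keys g"
  have f: "f = (\<Sum>u\<in>?F. Poly_Mapping.single u (Poly_Mapping.lookup f u))"
    by (rule poly_mapping_sum_single) auto
  have g: "g = (\<Sum>v\<in>?G. Poly_Mapping.single v (Poly_Mapping.lookup g v))"
    by (rule poly_mapping_sum_single) auto
  have "f * g = (\<Sum>u\<in>?F. \<Sum>v\<in>?G.
      Poly_Mapping.single u (Poly_Mapping.lookup f u) * Poly_Mapping.single v (Poly_Mapping.lookup g v))"
    by (subst f, subst g) (simp add: sum_product)
  then have "of_int_mpoly (f * g) = (\<Sum>u\<in>?F. \<Sum>v\<in>?G.
      Poly_Mapping.single u (of_int (Poly_Mapping.lookup f u)) *
      Poly_Mapping.single v (of_int (Poly_Mapping.lookup g v)))"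
    by (simp add: of_int_mpoly_sum mult_single of_int_mpoly_single)
  also have "\<dots> = of_int_mpoly f * of_int_mpoly g"
    by (simp add: of_int_mpoly_expand sum_product)
  finally show ?thesis .
qed

lemma of_int_mpoly_pow: "of_int_mpoly (f ^ k) = of_int_mpoly f ^ k"
  by (induct k) (simp_all add: of_int_mpoly_mult)

lemma of_int_mpoly_lin_form: "of_int_mpoly (lin_form l c) = lin_form l c"
  by (simp add: lin_form_def of_int_mpoly_sum of_int_mpoly_single)

lemma of_int_mpoly_der_apply:
  "of_int_mpoly (der_apply l \<delta> c) = der_apply l (\<lambda>j. of_int_mpoly (\<delta> j)) c"
  by (simp add: der_apply_def of_int_mpoly_sum of_int_mpoly_mult of_int_mpoly_mconst)

lemma of_int_mpoly_hc: "of_int_mpoly (hc d f) = hc d (of_int_mpoly f)"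
  by (rule poly_mapping_eqI) (simp add: lookup_of_int_mpoly lookup_hc)

lemma mpoly_in_of_int_mpoly: "mpoly_in l f \<Longrightarrow> mpoly_in l (of_int_mpoly f)"
  using keys_of_int_mpoly by (rule mpoly_in_subset)

lemma homog_of_int_mpoly: "homog d f \<Longrightarrow> homog d (of_int_mpoly f)"
  using keys_of_int_mpoly[of f] unfolding homog_def by blast

lemma of_int_mpoly_rat_inject: "(of_int_mpoly f :: rat mpoly) = of_int_mpoly g \<Longrightarrow> f = g"
  by (rule poly_mapping_eqI) (metis lookup_of_int_mpoly of_int_eq_iff)

definition scaled_int_mpoly :: "int \<Rightarrow> rat mpoly \<Rightarrow> int mpoly" where
  "scaled_int_mpoly N f = Poly_Mapping.map (\<lambda>r. \<lfloor>of_int N * r\<rfloor>) f"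

lemma keys_scaled_int_mpoly: "Poly_Mapping.keys (scaled_int_mpoly N f) \<subseteq> Poly_Mapping.keys f"
  unfolding scaled_int_mpoly_def by (rule keys_map_subset)

lemma scaled_int_mpoly_0 [simp]: "scaled_int_mpoly N 0 = 0"
  by (simp add: scaled_int_mpoly_def map_eq_zero_iff)

lemma mpoly_in_scaled_int_mpoly: "mpoly_in l f \<Longrightarrow> mpoly_in l (scaled_int_mpoly N f)"
  using keys_scaled_int_mpoly by (rule mpoly_in_subset)

lemma rat_mpoly_common_denominator:
  fixes F :: "'t \<Rightarrow> rat mpoly"
  assumes "finite T"
  shows "\<exists>N::int. N > 0 \<and> (\<forall>t\<in>T. of_int_mpoly (scaled_int_mpoly N (F t)) = mconst (of_int N) * F t)"
proof -
  have fin: "finite (Sigma T (\<lambda>t. Poly_Mapping.keys (F t)))"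
    using assms by simp
  obtain N :: int where "N > 0"
    and N: "\<forall>x\<in>Sigma T (\<lambda>t. Poly_Mapping.keys (F t)).
      of_int N * Poly_Mapping.lookup (F (fst x)) (snd x) \<in> \<int>"
    using rat_common_denominator[OF fin, where r = "\<lambda>x. Poly_Mapping.lookup (F (fst x)) (snd x)"]
    by blast
  have "of_int_mpoly (scaled_int_mpoly N (F t)) = mconst (of_int N) * F t" if "t \<in> T" for t
  proof (rule poly_mapping_eqI)
    fix u
    show "Poly_Mapping.lookup (of_int_mpoly (scaled_int_mpoly N (F t))) u =
        Poly_Mapping.lookup (mconst (of_int N) * F t) u"
      using N[rule_format, of "(t, u)"] that
      by (cases "u \<in> Poly_Mapping.keys (F t)")
        (auto simp: lookup_of_int_mpoly scaled_int_mpoly_def lookup_map_zero lookup_mconst_mult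
          in_keys_iff elim!: Ints_cases)
  qed
  with \<open>N > 0\<close> show ?thesis
    by blast
qed

section \<open>Logarithmic derivations\<close>

lemma der_apply_cong: "(\<And>j. j < l \<Longrightarrow> \<delta> j = \<delta>' j) \<Longrightarrow> der_apply l \<delta> c = der_apply l \<delta>' c"
  by (simp add: der_apply_def)

lemma der_apply_add: "der_apply l (\<lambda>j. \<delta> j + \<delta>' j) c = der_apply l \<delta> c + der_apply l \<delta>' c"
  by (simp add: der_apply_def sum.distrib algebra_simps)

lemma der_apply_diff:
  "der_apply l (\<lambda>j. \<delta> j - \<delta>' j) c = der_apply l \<delta> c - der_apply l (\<delta>' :: nat \<Rightarrow> 'k::comm_ring_1 mpoly) c"
  by (simp add: der_apply_def sum_subtractf algebra_simps)

lemma der_apply_mult: "der_apply l (\<lambda>j. g * \<delta> j) c = g * der_apply l \<delta> c"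
  by (simp add: der_apply_def sum_distrib_left algebra_simps)

lemma der_apply_hc: "der_apply l (\<lambda>j. hc d (\<delta> j)) c = hc d (der_apply l \<delta> c :: 'k::comm_ring_1 mpoly)"
  by (simp add: der_apply_def hc_sum hc_mconst_mult)

lemma DmodI:
  assumes "\<And>j. j < l \<Longrightarrow> mpoly_in l (\<delta> j)" "\<And>j. j \<ge> l \<Longrightarrow> \<delta> j = 0"
    and "\<And>i. i < n \<Longrightarrow> \<exists>q. mpoly_in l q \<and> der_apply l \<delta> (a i) = lin_form l (a i) ^ m i * q"
  shows "\<delta> \<in> Dmod l n a m"
  using assms by (auto simp: Dmod_def is_der_def)

lemma DmodD:
  assumes "\<delta> \<in> Dmod l n a m"
  shows "\<And>j. j < l \<Longrightarrow> mpoly_in l (\<delta> j)" "\<And>j. j \<ge> l \<Longrightarrow> \<delta> j = 0"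
    and "\<And>i. i < n \<Longrightarrow> \<exists>q. mpoly_in l q \<and> der_apply l \<delta> (a i) = lin_form l (a i) ^ m i * q"
  using assms by (auto simp: Dmod_def is_der_def)

lemma Dmod_obtain_quotients:
  assumes "\<delta> \<in> Dmod l n a m"
  obtains q where "\<And>i. i < n \<Longrightarrow> mpoly_in l (q i)"
    and "\<And>i. i < n \<Longrightarrow> der_apply l \<delta> (a i) = lin_form l (a i) ^ m i * q i"
  using DmodD(3)[OF assms] by metis

lemma Dmod_zero: "(\<lambda>j. 0) \<in> Dmod l n a m"
  by (rule DmodI) (auto simp: der_apply_def intro!: exI[of _ 0])

lemma Dmod_add:
  assumes "\<delta> \<in> Dmod l n a m" "\<delta>' \<in> Dmod l n a m"
  shows "(\<lambda>j. \<delta> j + \<delta>' j) \<in> Dmod l n a m"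
proof (rule DmodI)
  show "mpoly_in l (\<delta> j + \<delta>' j)" if "j < l" for j
    using DmodD(1)[OF assms(1) that] DmodD(1)[OF assms(2) that] by (rule mpoly_in_add)
  show "\<delta> j + \<delta>' j = 0" if "j \<ge> l" for j
    using DmodD(2)[OF assms(1) that] DmodD(2)[OF assms(2) that] by simp
  fix i
  assume "i < n"
  then obtain q q' where "mpoly_in l q" "der_apply l \<delta> (a i) = lin_form l (a i) ^ m i * q"
    and "mpoly_in l q'" "der_apply l \<delta>' (a i) = lin_form l (a i) ^ m i * q'"
    using DmodD(3)[OF assms(1)] DmodD(3)[OF assms(2)] by blast
  then show "\<exists>q. mpoly_in l q \<and> der_apply l (\<lambda>j. \<delta> j + \<delta>' j) (a i) = lin_form l (a i) ^ m i * q"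
    by (intro exI[of _ "q + q'"]) (simp add: der_apply_add mpoly_in_add algebra_simps)
qed

lemma Dmod_mult:
  assumes "mpoly_in l g" "\<delta> \<in> Dmod l n a m"
  shows "(\<lambda>j. g * \<delta> j) \<in> Dmod l n a m"
proof (rule DmodI)
  show "mpoly_in l (g * \<delta> j)" if "j < l" for j
    using assms(1) DmodD(1)[OF assms(2) that] by (rule mpoly_in_mult)
  show "g * \<delta> j = 0" if "j \<ge> l" for j
    using DmodD(2)[OF assms(2) that] by simp
  fix i
  assume "i < n"
  then obtain q where "mpoly_in l q" "der_apply l \<delta> (a i) = lin_form l (a i) ^ m i * q"
    using DmodD(3)[OF assms(2)] by blast
  then show "\<exists>q. mpoly_in l q \<and> der_apply l (\<lambda>j. g * \<delta> j) (a i) = lin_form l (a i) ^ m i * q"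
    using assms(1) by (intro exI[of _ "g * q"]) (simp add: der_apply_mult mpoly_in_mult algebra_simps)
qed

lemma Dmod_diff:
  assumes "\<delta> \<in> Dmod l n a m" "\<delta>' \<in> Dmod l n a m"
  shows "(\<lambda>j. \<delta> j - \<delta>' j :: 'k::comm_ring_1 mpoly) \<in> Dmod l n a m"
proof -
  have "(\<lambda>j. - 1 * \<delta>' j) \<in> Dmod l n a m"
    using Dmod_mult[OF mpoly_in_mconst[of l "- 1"] assms(2)]
    by (simp add: mconst_def single_uminus)
  then show ?thesis
    using Dmod_add[OF assms(1)] by fastforce
qed

lemma Dmod_sum:
  "(\<And>s. s \<in> S \<Longrightarrow> F s \<in> Dmod l n a m) \<Longrightarrow> (\<lambda>j. \<Sum>s\<in>S. F s j :: 'k::comm_ring_1 mpoly) \<in> Dmod l n a m"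
  by (induct S rule: infinite_finite_induct) (auto simp: Dmod_zero intro: Dmod_add[of "F _"])

lemma Dmod_hc:
  assumes "\<delta> \<in> Dmod l n a m"
  shows "(\<lambda>j. hc d (\<delta> j) :: 'k::comm_ring_1 mpoly) \<in> Dmod l n a m"
proof (rule DmodI)
  show "mpoly_in l (hc d (\<delta> j))" if "j < l" for j
    using DmodD(1)[OF assms that] by (rule mpoly_in_hc)
  show "hc d (\<delta> j) = 0" if "j \<ge> l" for j
    using DmodD(2)[OF assms that] by simp
  fix i
  assume "i < n"
  then obtain q where q: "mpoly_in l q" "der_apply l \<delta> (a i) = lin_form l (a i) ^ m i * q"
    using DmodD(3)[OF assms] by blast
  have "homog (1 * m i) (lin_form l (a i) ^ m i :: 'k mpoly)"
    by (intro homog_pow homog_lin_form)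
  then show "\<exists>q. mpoly_in l q \<and> der_apply l (\<lambda>j. hc d (\<delta> j)) (a i) = lin_form l (a i) ^ m i * q"
    using q by (intro exI[of _ "if m i \<le> d then hc (d - m i) q else 0"])
      (simp add: der_apply_hc hc_mult_homog mpoly_in_hc)
qed

lemma Dmod_of_int_mpoly:
  assumes "\<delta> \<in> Dmod l n a m"
  shows "(\<lambda>j. of_int_mpoly (\<delta> j) :: 'k::comm_ring_1 mpoly) \<in> Dmod l n a m"
proof (rule DmodI)
  show "mpoly_in l (of_int_mpoly (\<delta> j))" if "j < l" for j
    using DmodD(1)[OF assms that] by (rule mpoly_in_of_int_mpoly)
  show "of_int_mpoly (\<delta> j) = 0" if "j \<ge> l" for j
    using DmodD(2)[OF assms that] by simp
  fix i
  assume "i < n"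
  then obtain q where "mpoly_in l q" "der_apply l \<delta> (a i) = lin_form l (a i) ^ m i * q"
    using DmodD(3)[OF assms] by blast
  then show "\<exists>q. mpoly_in l q \<and>
      der_apply l (\<lambda>j. of_int_mpoly (\<delta> j)) (a i) = lin_form l (a i) ^ m i * (q :: 'k mpoly)"
    by (intro exI[of _ "of_int_mpoly q"])
      (simp add: mpoly_in_of_int_mpoly flip: of_int_mpoly_der_apply
        add: of_int_mpoly_mult of_int_mpoly_pow of_int_mpoly_lin_form)
qed

lemma in_M_plus_imageI:
  assumes "\<And>j. j < l \<Longrightarrow> mpoly_in l (g j)" "\<And>i. i < n \<Longrightarrow> mpoly_in l (q i)"
    and "\<And>i. i < n \<Longrightarrow> v i = der_apply l g (a i) + lin_form l (a i) ^ m i * q i"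
  shows "in_M_plus_image l n a m v"
  using assms unfolding in_M_plus_image_def der_apply_def by auto

lemma Dmod_corrected_lift:
  assumes \<theta>: "\<And>j. \<theta> j = (if j < l then \<delta> j - mconst c * g j else 0)"
    and \<delta>: "\<And>j. j < l \<Longrightarrow> mpoly_in l (\<delta> j)" and g: "\<And>j. j < l \<Longrightarrow> mpoly_in l (g j)"
    and q: "\<And>i. i < n \<Longrightarrow> mpoly_in l (q i)" and q': "\<And>i. i < n \<Longrightarrow> mpoly_in l (q' i)"
    and defect: "\<And>i. i < n \<Longrightarrow> der_apply l \<delta> (a i) - lin_form l (a i) ^ m i * q i =
                   mconst c * (der_apply l g (a i) + lin_form l (a i) ^ m i * q' i)"
  shows "\<theta> \<in> Dmod l n a m"
proof (rule DmodI)
  show "mpoly_in l (\<theta> j)" if "j < l" for j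
    using that \<delta> g by (simp add: \<theta> mpoly_in_diff mpoly_in_mult mpoly_in_mconst)
  show "\<theta> j = 0" if "l \<le> j" for j
    using that by (simp add: \<theta>)
  fix i
  assume i: "i < n"
  have "der_apply l \<theta> (a i) = der_apply l \<delta> (a i) - mconst c * der_apply l g (a i)"
    by (simp add: der_apply_cong[of l \<theta> "\<lambda>j. \<delta> j - mconst c * g j"] \<theta> der_apply_diff der_apply_mult)
  also have "\<dots> = lin_form l (a i) ^ m i * (q i + mconst c * q' i)"
    using defect[OF i] by (simp add: algebra_simps)
  finally have "der_apply l \<theta> (a i) = lin_form l (a i) ^ m i * (q i + mconst c * q' i)" .
  moreover have "mpoly_in l (q i + mconst c * q' i)"
    using q[OF i] q'[OF i] by (simp add: mpoly_in_add mpoly_in_mult mpoly_in_mconst)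
  ultimately show "\<exists>q. mpoly_in l q \<and> der_apply l \<theta> (a i) = lin_form l (a i) ^ m i * q"
    by blast
qed

lemma homog_der_hc: "homog_der d (\<lambda>j. hc d (\<delta> j))"
  by (simp add: homog_der_iff homog_hc)

lemma Dmod_rat_clear_denominators:
  assumes \<delta>: "\<delta> \<in> (Dmod l n a m :: (nat \<Rightarrow> rat mpoly) set)"
  obtains N :: int and \<delta>' where "N > 0" "\<delta>' \<in> Dmod l n a m"
    and "\<And>j. of_int_mpoly (\<delta>' j) = mconst (of_int N) * \<delta> j"
proof -
  obtain q where q: "\<And>i. i < n \<Longrightarrow> mpoly_in l (q i)"
    "\<And>i. i < n \<Longrightarrow> der_apply l \<delta> (a i) = lin_form l (a i) ^ m i * q i"
    using Dmod_obtain_quotients[OF \<delta>] by blast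
  obtain N :: int where "N > 0"
    and N: "\<And>t. t \<in> {..<l} <+> {..<n} \<Longrightarrow>
      of_int_mpoly (scaled_int_mpoly N (case_sum \<delta> q t)) = mconst (of_int N) * case_sum \<delta> q t"
    using rat_mpoly_common_denominator[of "{..<l} <+> {..<n}" "case_sum \<delta> q"] by auto
  define \<delta>' where "\<delta>' j = scaled_int_mpoly N (\<delta> j)" for j
  have \<delta>': "of_int_mpoly (\<delta>' j) = mconst (of_int N) * \<delta> j" for j
    using N[of "Inl j"] DmodD(2)[OF \<delta>, of j]
    by (cases "j < l") (auto simp: \<delta>'_def)
  have "\<delta>' \<in> Dmod l n a m"
  proof (rule DmodI)
    show "mpoly_in l (\<delta>' j)" if "j < l" for j
      unfolding \<delta>'_def using DmodD(1)[OF \<delta> that] by (rule mpoly_in_scaled_int_mpoly)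
    show "\<delta>' j = 0" if "l \<le> j" for j
      using DmodD(2)[OF \<delta> that] by (simp add: \<delta>'_def)
    fix i
    assume i: "i < n"
    have "of_int_mpoly (der_apply l \<delta>' (a i)) = mconst (of_int N) * (lin_form l (a i) ^ m i * q i)"
      by (simp add: of_int_mpoly_der_apply \<delta>' der_apply_mult q(2)[OF i])
    also have "\<dots> = lin_form l (a i) ^ m i * (mconst (of_int N) * q i)"
      by (rule mult.left_commute)
    also have "\<dots> = of_int_mpoly (lin_form l (a i) ^ m i * scaled_int_mpoly N (q i))"
      using N[of "Inr i"] i by (simp add: of_int_mpoly_mult of_int_mpoly_pow of_int_mpoly_lin_form Plus_def)
    finally have "der_apply l \<delta>' (a i) = lin_form l (a i) ^ m i * scaled_int_mpoly N (q i)"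
      by (rule of_int_mpoly_rat_inject)
    then show "\<exists>q. mpoly_in l q \<and> der_apply l \<delta>' (a i) = lin_form l (a i) ^ m i * q"
      using mpoly_in_scaled_int_mpoly[OF q(1)[OF i]] by blast
  qed
  with \<open>N > 0\<close> \<delta>' show thesis
    using that by blast
qed

section \<open>Reduction modulo p\<close>

definition int_lift :: "'p::prime_card mod_ring mpoly \<Rightarrow> int mpoly" where
  "int_lift f = Poly_Mapping.map to_int_mod_ring f"

lemma keys_int_lift: "Poly_Mapping.keys (int_lift f) \<subseteq> Poly_Mapping.keys f"
  unfolding int_lift_def by (rule keys_map_subset)

lemma mpoly_in_int_lift: "mpoly_in l f \<Longrightarrow> mpoly_in l (int_lift f)"
  using keys_int_lift by (rule mpoly_in_subset)

lemma of_int_mpoly_int_lift: "(of_int_mpoly (int_lift f) :: 'p::prime_card mod_ring mpoly) = f"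
  by (rule poly_mapping_eqI)
    (simp add: lookup_of_int_mpoly int_lift_def lookup_map_zero of_int_of_int_mod_ring)

definition div_coeffs :: "int \<Rightarrow> int mpoly \<Rightarrow> int mpoly" where
  "div_coeffs q f = Poly_Mapping.map (\<lambda>c. c div q) f"

lemma div_coeffs_0 [simp]: "div_coeffs q 0 = 0"
  by (simp add: div_coeffs_def map_eq_zero_iff)

lemma mpoly_in_div_coeffs: "mpoly_in l f \<Longrightarrow> mpoly_in l (div_coeffs q f)"
  unfolding div_coeffs_def using keys_map_subset by (rule mpoly_in_subset)

lemma of_int_mod_ring_eq_0_iff: "(of_int x :: 'p::prime_card mod_ring) = 0 \<longleftrightarrow> int CARD('p) dvd x"
  by transfer (simp add: dvd_eq_mod_eq_0)

lemma of_int_mpoly_mod_ring_eq_0: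
  assumes "(of_int_mpoly f :: 'p::prime_card mod_ring mpoly) = 0"
  shows "f = mconst (int CARD('p)) * div_coeffs (int CARD('p)) f"
proof (rule poly_mapping_eqI)
  fix u
  have "(of_int (Poly_Mapping.lookup f u) :: 'p mod_ring) = 0"
    using assms by (metis lookup_of_int_mpoly lookup_zero)
  then show "Poly_Mapping.lookup f u =
      Poly_Mapping.lookup (mconst (int CARD('p)) * div_coeffs (int CARD('p)) f) u"
    by (simp add: of_int_mod_ring_eq_0_iff lookup_mconst_mult div_coeffs_def lookup_map_zero)
qed

lemma of_int_mpoly_int_lift_defect:
  fixes \<delta> :: "nat \<Rightarrow> 'p::prime_card mod_ring mpoly"
  assumes "der_apply l \<delta> c = of_int_mpoly F * q"
  shows "(of_int_mpoly (der_apply l (\<lambda>j. int_lift (\<delta> j)) c - F * int_lift q) :: 'p mod_ring mpoly) = 0"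
  using assms by (simp add: of_int_mpoly_diff of_int_mpoly_der_apply of_int_mpoly_mult of_int_mpoly_int_lift)

lemma single_key_inject: "Poly_Mapping.single x (Suc 0) = Poly_Mapping.single k (Suc 0) \<Longrightarrow> x = k"
  by (metis lookup_single_eq lookup_single_not_eq zero_neq_one One_nat_def)

lemma lookup_lin_form:
  assumes "k < l"
  shows "Poly_Mapping.lookup (lin_form l c :: 'k::comm_ring_1 mpoly) (Poly_Mapping.single k 1) = of_int (c k)"
proof -
  have "Poly_Mapping.lookup (lin_form l c :: 'k mpoly) (Poly_Mapping.single k 1)
      = (\<Sum>k'<l. if k' = k then of_int (c k') else 0)"
    unfolding lin_form_def lookup_sum
    by (rule sum.cong) (auto simp: lookup_single when_def dest: single_key_inject)
  also have "\<dots> = of_int (c k)"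
    using assms by simp
  finally show ?thesis .
qed

locale good_reduction =
  fixes l n :: nat and a :: "nat \<Rightarrow> nat \<Rightarrow> int" and m :: "nat \<Rightarrow> nat"
    and pty :: "'p::prime_card itself"
  assumes primitive: "\<forall>i<n. \<forall>q::int. prime q \<longrightarrow> \<not> (\<forall>k<l. q dvd a i k)"
    and not_zero_divisor: "\<not> coker_zero_divisor l n a m (int CARD('p))"
begin

abbreviation reduce :: "int mpoly \<Rightarrow> 'p mod_ring mpoly" where "reduce \<equiv> of_int_mpoly"

abbreviation D_int :: "(nat \<Rightarrow> int mpoly) set" where "D_int \<equiv> Dmod l n a m"

abbreviation D_p :: "(nat \<Rightarrow> 'p mod_ring mpoly) set" where "D_p \<equiv> Dmod l n a m"

abbreviation D_rat :: "(nat \<Rightarrow> rat mpoly) set" where "D_rat \<equiv> Dmod l n a m"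

lemma p_ge_2: "int CARD('p) \<ge> 2"
  using prime_card_int prime_ge_2_int by blast

lemma lin_form_mod_p_nonzero:
  assumes "i < n"
  shows "(lin_form l (a i) :: 'p mod_ring mpoly) \<noteq> 0"
proof -
  obtain k where "k < l" "\<not> int CARD('p) dvd a i k"
    using primitive assms prime_card_int by blast
  then have "Poly_Mapping.lookup (lin_form l (a i) :: 'p mod_ring mpoly) (Poly_Mapping.single k 1) \<noteq> 0"
    unfolding lookup_lin_form[OF \<open>k < l\<close>] by (simp add: of_int_mod_ring_eq_0_iff)
  then show ?thesis
    by auto
qed

text \<open>Polynomials over \<open>\<int>/p\<close> form a domain, so by \<open>lin_form_mod_p_nonzero\<close> the
  quotient q in \<open>\<delta>(\<alpha>\<^sub>i) = \<alpha>\<^sub>i\<^sup>m q\<close> vanishes modulo p along with \<open>\<delta>\<close>.\<close>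

lemma Dmod_int_divide_by_p:
  assumes \<delta>: "\<delta> \<in> D_int" and red: "\<And>j. reduce (\<delta> j) = 0"
  shows "\<exists>\<delta>'\<in>D_int. \<forall>j. \<delta> j = mconst (int CARD('p)) * \<delta>' j"
proof -
  define \<delta>' where "\<delta>' j = div_coeffs (int CARD('p)) (\<delta> j)" for j
  have \<delta>_eq: "\<delta> j = mconst (int CARD('p)) * \<delta>' j" for j
    unfolding \<delta>'_def using red by (rule of_int_mpoly_mod_ring_eq_0)
  then have \<delta>_fun: "\<delta> = (\<lambda>j. mconst (int CARD('p)) * \<delta>' j)"
    by blast
  have "\<delta>' \<in> D_int"
  proof (rule DmodI)
    show "mpoly_in l (\<delta>' j)" if "j < l" for j
      unfolding \<delta>'_def using DmodD(1)[OF \<delta> that] by (rule mpoly_in_div_coeffs)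
    show "\<delta>' j = 0" if "l \<le> j" for j
      using DmodD(2)[OF \<delta> that] by (simp add: \<delta>'_def)
    fix i
    assume i: "i < n"
    obtain q where q: "mpoly_in l q" "der_apply l \<delta> (a i) = lin_form l (a i) ^ m i * q"
      using DmodD(3)[OF \<delta> i] by blast
    have "reduce (der_apply l \<delta> (a i)) = 0"
      unfolding of_int_mpoly_der_apply using red by (simp add: der_apply_def)
    then have "(lin_form l (a i) :: 'p mod_ring mpoly) ^ m i * reduce q = 0"
      by (simp add: q(2) of_int_mpoly_mult of_int_mpoly_pow of_int_mpoly_lin_form)
    then have "reduce q = 0"
      using lin_form_mod_p_nonzero[OF i] by simp
    then have "q = mconst (int CARD('p)) * div_coeffs (int CARD('p)) q"
      by (rule of_int_mpoly_mod_ring_eq_0)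
    have "mconst (int CARD('p)) * der_apply l \<delta>' (a i) = der_apply l \<delta> (a i)"
      by (simp add: \<delta>_fun der_apply_mult)
    also have "\<dots> = mconst (int CARD('p)) * (lin_form l (a i) ^ m i * div_coeffs (int CARD('p)) q)"
      using q(2) \<open>q = _\<close> by (metis mult.left_commute)
    finally have "mconst (int CARD('p)) * der_apply l \<delta>' (a i) =
        mconst (int CARD('p)) * (lin_form l (a i) ^ m i * div_coeffs (int CARD('p)) q)" .
    then have "der_apply l \<delta>' (a i) = lin_form l (a i) ^ m i * div_coeffs (int CARD('p)) q"
      using p_ge_2 by simp
    then show "\<exists>q. mpoly_in l q \<and> der_apply l \<delta>' (a i) = lin_form l (a i) ^ m i * q"
      using mpoly_in_div_coeffs[OF q(1)] by blast
  qed
  with \<delta>_eq show ?thesis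
    by blast
qed

lemma lift_Dmod:
  assumes \<delta>: "\<delta> \<in> D_p"
  shows "\<exists>\<theta>\<in>D_int. \<forall>j. reduce (\<theta> j) = \<delta> j"
proof -
  obtain q where q: "\<And>i. i < n \<Longrightarrow> mpoly_in l (q i)"
    "\<And>i. i < n \<Longrightarrow> der_apply l \<delta> (a i) = lin_form l (a i) ^ m i * q i"
    using Dmod_obtain_quotients[OF \<delta>] by blast
  define \<delta>0 where "\<delta>0 = (\<lambda>j. int_lift (\<delta> j))"
  define w where "w i = div_coeffs (int CARD('p)) (der_apply l \<delta>0 (a i) - lin_form l (a i) ^ m i * int_lift (q i))" for i
  have \<delta>0_in: "mpoly_in l (\<delta>0 j)" if "j < l" for j
    unfolding \<delta>0_def using DmodD(1)[OF \<delta> that] by (rule mpoly_in_int_lift)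
  have defect: "der_apply l \<delta>0 (a i) - lin_form l (a i) ^ m i * int_lift (q i) = mconst (int CARD('p)) * w i"
    if "i < n" for i
    unfolding w_def \<delta>0_def
    by (rule of_int_mpoly_mod_ring_eq_0, rule of_int_mpoly_int_lift_defect)
      (simp add: q(2)[OF that] of_int_mpoly_pow of_int_mpoly_lin_form)
  have w_in: "mpoly_in l (w i)" if "i < n" for i
    unfolding w_def using \<delta>0_in q(1)[OF that]
    by (intro mpoly_in_div_coeffs mpoly_in_diff mpoly_in_mult mpoly_in_pow mpoly_in_lin_form
        mpoly_in_int_lift) (auto simp: der_apply_def intro!: mpoly_in_sum mpoly_in_mult mpoly_in_mconst)
  have "in_M_plus_image l n a m (\<lambda>i. mconst (int CARD('p)) * w i)"
    by (rule in_M_plus_imageI[where g = \<delta>0 and q = "\<lambda>i. - int_lift (q i)"])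
      (use \<delta>0_in q(1) defect in \<open>auto intro: mpoly_in_uminus mpoly_in_int_lift\<close>)
  then have "in_M_plus_image l n a m w"
    using not_zero_divisor w_in unfolding coker_zero_divisor_def by blast
  then obtain g q' where g: "\<And>j. j < l \<Longrightarrow> mpoly_in l (g j)"
    and q': "\<And>i. i < n \<Longrightarrow> mpoly_in l (q' i)"
      "\<And>i. i < n \<Longrightarrow> w i = der_apply l g (a i) + lin_form l (a i) ^ m i * q' i"
    unfolding in_M_plus_image_def der_apply_def by auto
  define \<theta> where "\<theta> j = (if j < l then \<delta>0 j - mconst (int CARD('p)) * g j else 0)" for j
  have "\<theta> \<in> D_int"
  proof (rule Dmod_corrected_lift[OF \<theta>_def \<delta>0_in g])
    show "mpoly_in l (int_lift (q i))" if "i < n" for i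
      using q(1)[OF that] by (rule mpoly_in_int_lift)
    show "der_apply l \<delta>0 (a i) - lin_form l (a i) ^ m i * int_lift (q i) =
        mconst (int CARD('p)) * (der_apply l g (a i) + lin_form l (a i) ^ m i * q' i)" if "i < n" for i
      using defect[OF that] q'(2)[OF that] by simp
  qed (simp_all add: q'(1))
  moreover have "reduce (\<theta> j) = \<delta> j" for j
  proof (cases "j < l")
    case True
    have "reduce (mconst (int CARD('p))) = 0"
      by (simp add: of_int_mpoly_mconst)
    then show ?thesis
      using True by (simp add: \<theta>_def of_int_mpoly_diff of_int_mpoly_mult \<delta>0_def of_int_mpoly_int_lift)
  next
    case False
    then show ?thesis
      using DmodD(2)[OF \<delta>, of j] by (simp add: \<theta>_def)
  qed
  ultimately show ?thesis
    by blast
qed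

lemma lift_homog_Dmod:
  assumes "\<delta> \<in> D_p" "homog_der d \<delta>"
  shows "\<exists>\<theta>\<in>D_int. homog_der d \<theta> \<and> (\<forall>j. reduce (\<theta> j) = \<delta> j)"
proof -
  obtain \<theta> where "\<theta> \<in> D_int" and \<theta>: "\<forall>j. reduce (\<theta> j) = \<delta> j"
    using lift_Dmod[OF assms(1)] by blast
  have "reduce (hc d (\<theta> j)) = \<delta> j" for j
    using assms(2) \<theta> by (simp add: of_int_mpoly_hc hc_homog homog_der_iff)
  then show ?thesis
    using Dmod_hc[OF \<open>\<theta> \<in> D_int\<close>] homog_der_hc by blast
qed


lemma lift_basis:
  assumes "free_with_exponents l D_p e"
  shows "\<exists>\<theta>. (\<forall>s<l. \<theta> s \<in> D_int \<and> homog_der (e s) (\<theta> s)) \<and>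
    (\<forall>\<delta>\<in>D_p. \<exists>!g. (\<forall>s<l. mpoly_in l (g s)) \<and> (\<forall>s\<ge>l. g s = 0) \<and>
       \<delta> = (\<lambda>j. \<Sum>s<l. g s * reduce (\<theta> s j)))"
proof -
  obtain B where B: "\<forall>s<l. B s \<in> D_p \<and> homog_der (e s) (B s)"
    and basis: "\<forall>\<delta>\<in>D_p. \<exists>!g. (\<forall>s<l. mpoly_in l (g s)) \<and> (\<forall>s\<ge>l. g s = 0) \<and>
           \<delta> = (\<lambda>j. \<Sum>s<l. g s * B s j)"
    using assms unfolding free_with_exponents_def by blast
  have "\<forall>s. \<exists>\<theta>. s < l \<longrightarrow> \<theta> \<in> D_int \<and> homog_der (e s) \<theta> \<and> (\<forall>j. reduce (\<theta> j) = B s j)"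
    using B lift_homog_Dmod by blast
  then obtain \<theta> where \<theta>: "\<forall>s. s < l \<longrightarrow> \<theta> s \<in> D_int \<and> homog_der (e s) (\<theta> s) \<and>
      (\<forall>j. reduce (\<theta> s j) = B s j)"
    by (rule choice[THEN exE])
  have "(\<lambda>j. \<Sum>s<l. g s * reduce (\<theta> s j)) = (\<lambda>j. \<Sum>s<l. g s * B s j)" for g
    using \<theta> by simp
  with basis have "\<forall>\<delta>\<in>D_p. \<exists>!g. (\<forall>s<l. mpoly_in l (g s)) \<and> (\<forall>s\<ge>l. g s = 0) \<and>
      \<delta> = (\<lambda>j. \<Sum>s<l. g s * reduce (\<theta> s j))"
    by simp
  moreover have "\<forall>s<l. \<theta> s \<in> D_int \<and> homog_der (e s) (\<theta> s)"
    using \<theta> by simp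
  ultimately show ?thesis
    by blast
qed

end

section \<open>Lifting a basis of the reduction\<close>

definition coeff_vec :: "(nat \<Rightarrow> 'k::zero mpoly) \<Rightarrow> nat \<times> (nat \<Rightarrow>\<^sub>0 nat) \<Rightarrow> 'k" where
  "coeff_vec \<delta> x = Poly_Mapping.lookup (\<delta> (fst x)) (snd x)"

lemma coeff_vec_inject:
  assumes "coeff_vec \<delta> = coeff_vec \<delta>'"
  shows "\<delta> = \<delta>'"
proof (rule ext, rule poly_mapping_eqI)
  fix j u
  show "Poly_Mapping.lookup (\<delta> j) u = Poly_Mapping.lookup (\<delta>' j) u"
    using fun_cong[OF assms, of "(j, u)"] by (simp add: coeff_vec_def)
qed

lemma coeff_vec_add: "coeff_vec (\<lambda>j. \<delta> j + \<delta>' j) = coeff_vec \<delta> + coeff_vec \<delta>'"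
  by (simp add: fun_eq_iff coeff_vec_def lookup_add)

lemma coeff_vec_mconst_mult: "coeff_vec (\<lambda>j. mconst c * \<delta> j) = scale_fun c (coeff_vec \<delta>)"
  by (simp add: fun_eq_iff coeff_vec_def scale_fun_def lookup_mconst_mult)

lemma coeff_vec_of_int_mpoly: "coeff_vec (\<lambda>j. of_int_mpoly (\<delta> j)) x = of_int (coeff_vec \<delta> x)"
  by (simp add: coeff_vec_def lookup_of_int_mpoly)

lemma coeff_vec_homog_Dmod_support:
  assumes "\<epsilon> \<in> Dmod l n a m" "homog_der d \<epsilon>" "x \<notin> {..<l} \<times> monoms l d"
  shows "coeff_vec \<epsilon> x = 0"
proof (cases "fst x < l")
  case True
  then have "snd x \<notin> Poly_Mapping.keys (\<epsilon> (fst x))"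
    using assms(2,3) keys_subset_monoms[OF DmodD(1)[OF assms(1) True]]
    by (cases x) (auto simp: homog_der_iff)
  then show ?thesis
    by (simp add: coeff_vec_def in_keys_iff)
next
  case False
  then show ?thesis
    using DmodD(2)[OF assms(1), of "fst x"] by (simp add: coeff_vec_def)
qed

locale lifted_basis = good_reduction l n a m pty
  for l n a m and pty :: "'p::prime_card itself" +
  fixes e :: "nat \<Rightarrow> nat" and \<theta> :: "nat \<Rightarrow> nat \<Rightarrow> int mpoly"
  assumes lifted_in_D: "s < l \<Longrightarrow> \<theta> s \<in> D_int"
    and lifted_homog: "s < l \<Longrightarrow> homog_der (e s) (\<theta> s)"
    and reduced_basis: "\<delta> \<in> D_p \<Longrightarrow> \<exists>!g. (\<forall>s<l. mpoly_in l (g s)) \<and> (\<forall>s\<ge>l. g s = 0) \<and>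
                          \<delta> = (\<lambda>j. \<Sum>s<l. g s * reduce (\<theta> s j))"

context lifted_basis
begin

lemma expansion_mod_p:
  assumes \<delta>: "\<delta> \<in> D_int"
  obtains g \<delta>' where "\<And>s. s < l \<Longrightarrow> mpoly_in l (g s)" "\<delta>' \<in> D_int"
    and "\<And>j. \<delta> j = (\<Sum>s<l. g s * \<theta> s j) + mconst (int CARD('p)) * \<delta>' j"
proof -
  obtain g where g: "\<forall>s<l. mpoly_in l (g s)"
    and red: "(\<lambda>j. reduce (\<delta> j)) = (\<lambda>j. \<Sum>s<l. g s * reduce (\<theta> s j))"
    using reduced_basis[OF Dmod_of_int_mpoly[OF \<delta>]] by blast
  define r where "r j = \<delta> j - (\<Sum>s<l. int_lift (g s) * \<theta> s j)" for j
  have "r \<in> D_int"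
    unfolding r_def using \<delta> g lifted_in_D
    by (intro Dmod_diff Dmod_sum Dmod_mult mpoly_in_int_lift) auto
  moreover have "reduce (r j) = 0" for j
    using fun_cong[OF red, of j]
    by (simp add: r_def of_int_mpoly_diff of_int_mpoly_sum of_int_mpoly_mult of_int_mpoly_int_lift)
  ultimately obtain \<delta>' where "\<delta>' \<in> D_int" "\<And>j. r j = mconst (int CARD('p)) * \<delta>' j"
    using Dmod_int_divide_by_p by blast
  then show thesis
    using g by (intro that[of "\<lambda>s. int_lift (g s)" \<delta>']) (auto simp: r_def mpoly_in_int_lift algebra_simps)
qed

text \<open>Taking degree-d components of the expansion keeps the remainder homogeneous, as the
  \<open>\<theta> s\<close> are homogeneous.\<close>

lemma homog_expansion_mod_p:
  assumes \<delta>: "\<delta> \<in> D_int" "homog_der d \<delta>"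
  obtains g \<delta>' where "\<And>s. s < l \<Longrightarrow> mpoly_in l (g s)" "\<delta>' \<in> D_int" "homog_der d \<delta>'"
    and "\<And>j. \<delta> j = (\<Sum>s<l. g s * \<theta> s j) + mconst (int CARD('p)) * \<delta>' j"
proof -
  obtain g \<delta>' where g: "\<And>s. s < l \<Longrightarrow> mpoly_in l (g s)" and "\<delta>' \<in> D_int"
    and \<delta>_eq: "\<And>j. \<delta> j = (\<Sum>s<l. g s * \<theta> s j) + mconst (int CARD('p)) * \<delta>' j"
    using expansion_mod_p[OF \<delta>(1)] by blast
  define g' where "g' s = (if e s \<le> d then hc (d - e s) (g s) else 0)" for s
  have "\<delta> j = (\<Sum>s<l. g' s * \<theta> s j) + mconst (int CARD('p)) * hc d (\<delta>' j)" for j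
  proof -
    have "\<delta> j = hc d (\<delta> j)"
      using \<delta>(2) by (simp add: hc_homog homog_der_iff)
    also have "\<dots> = (\<Sum>s<l. g' s * \<theta> s j) + mconst (int CARD('p)) * hc d (\<delta>' j)"
      using lifted_homog by (simp add: \<delta>_eq[of j] hc_add hc_mconst_mult hc_lin_comb g'_def homog_der_iff)
    finally show ?thesis .
  qed
  moreover have "mpoly_in l (g' s)" if "s < l" for s
    using g[OF that] by (simp add: g'_def mpoly_in_hc)
  ultimately show thesis
    using Dmod_hc[OF \<open>\<delta>' \<in> D_int\<close>] homog_der_hc by (intro that) auto
qed

lemma padic_expansion:
  assumes "\<delta> \<in> D_int" "homog_der d \<delta>"
  shows "\<exists>G \<epsilon>. (\<forall>s<l. mpoly_in l (G s)) \<and> \<epsilon> \<in> D_int \<and> homog_der d \<epsilon> \<and>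
    (\<forall>j. \<delta> j = (\<Sum>s<l. G s * \<theta> s j) + mconst (int CARD('p) ^ k) * \<epsilon> j)"
proof (induct k)
  case 0
  show ?case
    by (rule exI[of _ "\<lambda>_. 0"], rule exI[of _ \<delta>]) (simp add: assms)
next
  case (Suc k)
  then obtain G \<epsilon> where G: "\<forall>s<l. mpoly_in l (G s)" and \<epsilon>: "\<epsilon> \<in> D_int" "homog_der d \<epsilon>"
    and \<delta>_eq: "\<forall>j. \<delta> j = (\<Sum>s<l. G s * \<theta> s j) + mconst (int CARD('p) ^ k) * \<epsilon> j"
    by blast
  obtain g \<epsilon>' where g: "\<And>s. s < l \<Longrightarrow> mpoly_in l (g s)" and \<epsilon>': "\<epsilon>' \<in> D_int" "homog_der d \<epsilon>'"
    and \<epsilon>_eq: "\<And>j. \<epsilon> j = (\<Sum>s<l. g s * \<theta> s j) + mconst (int CARD('p)) * \<epsilon>' j"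
    using homog_expansion_mod_p[OF \<epsilon>] by blast
  let ?G = "\<lambda>s. G s + mconst (int CARD('p) ^ k) * g s"
  have \<delta>_eq': "\<delta> j = (\<Sum>s<l. ?G s * \<theta> s j) + mconst (int CARD('p) ^ Suc k) * \<epsilon>' j" for j
    by (simp add: \<delta>_eq \<epsilon>_eq distrib_right sum.distrib sum_distrib_left mconst_mult algebra_simps)
  have "\<forall>s<l. mpoly_in l (?G s)"
    using G g by (simp add: mpoly_in_add mpoly_in_mult mpoly_in_mconst)
  with \<epsilon>' \<delta>_eq' show ?case
    by (intro exI[of _ ?G] exI[of _ \<epsilon>'] conjI allI) auto
qed

definition rat_span :: "(nat \<Rightarrow> rat mpoly) set" where
  "rat_span = {(\<lambda>j. \<Sum>s<l. G s * of_int_mpoly (\<theta> s j)) | G. \<forall>s<l. mpoly_in l (G s)}"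

lemma rat_span_zero: "(\<lambda>j. 0) \<in> rat_span"
  unfolding rat_span_def by (intro CollectI exI[of _ "\<lambda>_. 0"]) simp

lemma rat_span_add:
  assumes "\<delta> \<in> rat_span" "\<delta>' \<in> rat_span"
  shows "(\<lambda>j. \<delta> j + \<delta>' j) \<in> rat_span"
proof -
  obtain G G' where "\<forall>s<l. mpoly_in l (G s)" "\<forall>s<l. mpoly_in l (G' s)"
    and "\<delta> = (\<lambda>j. \<Sum>s<l. G s * of_int_mpoly (\<theta> s j))" "\<delta>' = (\<lambda>j. \<Sum>s<l. G' s * of_int_mpoly (\<theta> s j))"
    using assms unfolding rat_span_def by blast
  then show ?thesis
    unfolding rat_span_def
    by (intro CollectI exI[of _ "\<lambda>s. G s + G' s"]) (simp add: mpoly_in_add distrib_right sum.distrib)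
qed

lemma rat_span_mult:
  assumes "\<delta> \<in> rat_span" "mpoly_in l c"
  shows "(\<lambda>j. c * \<delta> j) \<in> rat_span"
proof -
  obtain G where "\<forall>s<l. mpoly_in l (G s)" and "\<delta> = (\<lambda>j. \<Sum>s<l. G s * of_int_mpoly (\<theta> s j))"
    using assms(1) unfolding rat_span_def by blast
  then show ?thesis
    unfolding rat_span_def using assms(2)
    by (intro CollectI exI[of _ "\<lambda>s. c * G s"]) (simp add: mpoly_in_mult sum_distrib_left mult.assoc)
qed

lemma rat_span_sum: "(\<And>d. d \<in> D \<Longrightarrow> F d \<in> rat_span) \<Longrightarrow> (\<lambda>j. \<Sum>d\<in>D. F d j) \<in> rat_span"
  by (induct D rule: infinite_finite_induct) (auto simp: rat_span_zero intro: rat_span_add[of "F _"])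

lemma subspace_coeff_vec_rat_span: "rat_fun.vs1.subspace (coeff_vec ` rat_span)"
  unfolding rat_fun.vs1.subspace_def
proof (intro conjI ballI allI)
  show "0 \<in> coeff_vec ` rat_span"
    using rat_span_zero by (force simp: coeff_vec_def)
  show "x + y \<in> coeff_vec ` rat_span" if "x \<in> coeff_vec ` rat_span" "y \<in> coeff_vec ` rat_span" for x y
    using that rat_span_add by (auto simp flip: coeff_vec_add)
  show "scale_fun c x \<in> coeff_vec ` rat_span" if "x \<in> coeff_vec ` rat_span" for c x
    using that rat_span_mult[OF _ mpoly_in_mconst] by (auto simp flip: coeff_vec_mconst_mult)
qed

lemma homog_Dmod_int_in_rat_span:
  assumes \<delta>: "\<delta> \<in> D_int" "homog_der d \<delta>"
  shows "(\<lambda>j. of_int_mpoly (\<delta> j)) \<in> rat_span"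
proof -
  have "coeff_vec (\<lambda>j. of_int_mpoly (\<delta> j) :: rat mpoly) \<in> coeff_vec ` rat_span"
  proof (rule padic_limit_in_subspace[OF subspace_coeff_vec_rat_span _ p_ge_2])
    show "finite ({..<l} \<times> monoms l d)"
      by (simp add: finite_monoms)
    fix k
    obtain G \<epsilon> where G: "\<forall>s<l. mpoly_in l (G s)" and \<epsilon>: "\<epsilon> \<in> D_int" "homog_der d \<epsilon>"
      and \<delta>_eq: "\<forall>j. \<delta> j = (\<Sum>s<l. G s * \<theta> s j) + mconst (int CARD('p) ^ k) * \<epsilon> j"
      using padic_expansion[OF \<delta>] by blast
    let ?w = "\<lambda>j. \<Sum>s<l. of_int_mpoly (G s) * of_int_mpoly (\<theta> s j) :: rat mpoly"
    let ?e = "coeff_vec (\<lambda>j. of_int_mpoly (\<epsilon> j) :: rat mpoly)"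
    have "?w \<in> rat_span"
      unfolding rat_span_def using G
      by (intro CollectI exI[of _ "\<lambda>s. of_int_mpoly (G s)"]) (simp add: mpoly_in_of_int_mpoly)
    have "(\<lambda>j. of_int_mpoly (\<delta> j) :: rat mpoly) =
        (\<lambda>j. ?w j + mconst (of_int (int CARD('p) ^ k)) * of_int_mpoly (\<epsilon> j))"
      using \<delta>_eq by (simp add: of_int_mpoly_add of_int_mpoly_sum of_int_mpoly_mult of_int_mpoly_mconst)
    then have "coeff_vec (\<lambda>j. of_int_mpoly (\<delta> j) :: rat mpoly) =
        coeff_vec ?w + scale_fun (of_int (int CARD('p) ^ k)) ?e"
      by (simp add: coeff_vec_add coeff_vec_mconst_mult)
    moreover have "?e x = 0" if "x \<notin> {..<l} \<times> monoms l d" for x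
      using coeff_vec_homog_Dmod_support[OF \<epsilon> that] by (simp add: coeff_vec_of_int_mpoly)
    moreover have "?e x \<in> \<int>" for x
      by (simp add: coeff_vec_of_int_mpoly)
    moreover have "coeff_vec ?w \<in> coeff_vec ` rat_span"
      using \<open>?w \<in> rat_span\<close> by (rule imageI)
    ultimately show "\<exists>w\<in>coeff_vec ` rat_span. \<exists>\<epsilon>. (\<forall>x. \<epsilon> x \<in> \<int>) \<and>
        (\<forall>x. x \<notin> {..<l} \<times> monoms l d \<longrightarrow> \<epsilon> x = 0) \<and>
        coeff_vec (\<lambda>j. of_int_mpoly (\<delta> j)) = w + scale_fun (of_int (int CARD('p) ^ k)) \<epsilon>"
      by (intro bexI[where x = "coeff_vec ?w"] exI[where x = ?e] conjI allI impI) simp_all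
  qed
  then show ?thesis
    using coeff_vec_inject by blast
qed

lemma Dmod_rat_in_rat_span:
  assumes "\<delta> \<in> D_rat"
  shows "\<delta> \<in> rat_span"
proof -
  obtain N :: int and \<delta>' where "N > 0" "\<delta>' \<in> D_int"
    and \<delta>': "\<And>j. of_int_mpoly (\<delta>' j) = mconst (of_int N) * \<delta> j"
    using Dmod_rat_clear_denominators[OF assms] by blast
  define D where "D = mdeg ` (\<Union>j<l. Poly_Mapping.keys (\<delta>' j))"
  have "(\<Sum>d\<in>D. hc d (\<delta>' j)) = \<delta>' j" for j
  proof (cases "j < l")
    case True
    show ?thesis
      by (rule sum_hc) (use True in \<open>auto simp: D_def\<close>)
  next
    case False
    then show ?thesis
      using DmodD(2)[OF \<open>\<delta>' \<in> D_int\<close>, of j] by simp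
  qed
  then have "(\<lambda>j. \<Sum>d\<in>D. of_int_mpoly (hc d (\<delta>' j))) = (\<lambda>j. mconst (of_int N) * \<delta> j)"
    by (simp add: \<delta>' flip: of_int_mpoly_sum)
  moreover have "(\<lambda>j. \<Sum>d\<in>D. of_int_mpoly (hc d (\<delta>' j))) \<in> rat_span"
  proof (rule rat_span_sum)
    fix d
    show "(\<lambda>j. of_int_mpoly (hc d (\<delta>' j))) \<in> rat_span"
      using Dmod_hc[OF \<open>\<delta>' \<in> D_int\<close>] homog_der_hc by (rule homog_Dmod_int_in_rat_span)
  qed
  ultimately have "(\<lambda>j. mconst (of_int N) * \<delta> j) \<in> rat_span"
    by simp
  then have "(\<lambda>j. mconst (1 / of_int N) * (mconst (of_int N) * \<delta> j)) \<in> rat_span"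
    using mpoly_in_mconst by (rule rat_span_mult)
  then show ?thesis
    using \<open>N > 0\<close> by (simp add: mult.assoc[symmetric] mconst_mult[symmetric])
qed

lemma int_relation_divisible:
  assumes H: "\<forall>s<l. mpoly_in l (H s)" and rel: "\<And>j. (\<Sum>s<l. H s * \<theta> s j) = 0"
  shows "\<exists>H'. (\<forall>s<l. mpoly_in l (H' s)) \<and> (\<forall>j. (\<Sum>s<l. H' s * \<theta> s j) = 0) \<and>
    (\<forall>s<l. H s = mconst (int CARD('p)) * H' s)"
proof -
  let ?g = "\<lambda>s. if s < l then reduce (H s) else 0"
  have "(\<Sum>s<l. ?g s * reduce (\<theta> s j)) = reduce (\<Sum>s<l. H s * \<theta> s j)" for j
    unfolding of_int_mpoly_sum by (rule sum.cong) (simp_all add: of_int_mpoly_mult)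
  then have "(\<lambda>j. 0) = (\<lambda>j. \<Sum>s<l. ?g s * reduce (\<theta> s j))"
    using rel by simp
  then have g_rep: "(\<forall>s<l. mpoly_in l (?g s)) \<and> (\<forall>s\<ge>l. ?g s = 0) \<and>
      (\<lambda>j. 0) = (\<lambda>j. \<Sum>s<l. ?g s * reduce (\<theta> s j))"
    using H by (simp add: mpoly_in_of_int_mpoly)
  have zero_rep: "(\<forall>s<l. mpoly_in l ((\<lambda>_. 0) s :: 'p mod_ring mpoly)) \<and> (\<forall>s\<ge>l. (\<lambda>_. 0) s = (0 :: 'p mod_ring mpoly)) \<and>
      (\<lambda>j. 0) = (\<lambda>j. \<Sum>s<l. (\<lambda>_. 0) s * reduce (\<theta> s j))"
    by simp
  have g0: "?g = (\<lambda>_. 0)"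
    by (rule Uniq_D[OF reduced_basis[OF Dmod_zero, unfolded ex1_iff_ex_Uniq, THEN conjunct2]])
      (fact g_rep, fact zero_rep)
  have red: "reduce (H s) = 0" if "s < l" for s
    using fun_cong[OF g0, of s] that by simp
  have H_eq: "mconst (int CARD('p)) * div_coeffs (int CARD('p)) (H s) = H s" if "s < l" for s
    using red[OF that] by (rule of_int_mpoly_mod_ring_eq_0[THEN sym])
  have "mconst (int CARD('p)) * (\<Sum>s<l. div_coeffs (int CARD('p)) (H s) * \<theta> s j) = 0" for j
  proof -
    have "mconst (int CARD('p)) * (\<Sum>s<l. div_coeffs (int CARD('p)) (H s) * \<theta> s j) =
        (\<Sum>s<l. (mconst (int CARD('p)) * div_coeffs (int CARD('p)) (H s)) * \<theta> s j)"
      by (simp add: sum_distrib_left mult.assoc)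
    also have "\<dots> = (\<Sum>s<l. H s * \<theta> s j)"
      by (rule sum.cong) (simp_all add: H_eq)
    finally show ?thesis
      using rel[of j] by simp
  qed
  then have "(\<Sum>s<l. div_coeffs (int CARD('p)) (H s) * \<theta> s j) = 0" for j
    using p_ge_2 by simp
  then show ?thesis
    using H H_eq by (intro exI[of _ "\<lambda>s. div_coeffs (int CARD('p)) (H s)"]) (auto intro: mpoly_in_div_coeffs)
qed

lemma int_relation_trivial:
  assumes "\<forall>s<l. mpoly_in l (H s)" "\<And>j. (\<Sum>s<l. H s * \<theta> s j) = 0" "s < l"
  shows "H s = 0"
proof -
  have powers: "\<exists>H'. (\<forall>s<l. mpoly_in l (H' s)) \<and> (\<forall>j. (\<Sum>s<l. H' s * \<theta> s j) = 0) \<and>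
      (\<forall>s<l. H s = mconst (int CARD('p) ^ k) * H' s)" for k
  proof (induct k)
    case 0
    show ?case
      by (rule exI[of _ H]) (simp add: assms(1,2))
  next
    case (Suc k)
    then obtain H' where H': "\<forall>s<l. mpoly_in l (H' s)" "\<forall>j. (\<Sum>s<l. H' s * \<theta> s j) = 0"
      and H: "\<forall>s<l. H s = mconst (int CARD('p) ^ k) * H' s"
      by blast
    obtain H'' where "\<forall>s<l. mpoly_in l (H'' s)" "\<forall>j. (\<Sum>s<l. H'' s * \<theta> s j) = 0"
      and H'': "\<forall>s<l. H' s = mconst (int CARD('p)) * H'' s"
      using int_relation_divisible[OF H'(1)] H'(2) by blast
    moreover have "\<forall>s<l. H s = mconst (int CARD('p) ^ Suc k) * H'' s"
      using H H'' by (simp add: mconst_mult mult_ac)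
    ultimately show ?case
      by blast
  qed
  have dvd_H: "int CARD('p) ^ k dvd Poly_Mapping.lookup (H s) u" for k u
  proof -
    obtain H' where "\<forall>s<l. H s = mconst (int CARD('p) ^ k) * H' s"
      using powers[of k] by blast
    then show ?thesis
      using \<open>s < l\<close> by (simp add: lookup_mconst_mult)
  qed
  show ?thesis
  proof (rule poly_mapping_eqI)
    fix u
    show "Poly_Mapping.lookup (H s) u = Poly_Mapping.lookup 0 u"
      using zero_if_dvd_all_powers[OF p_ge_2 dvd_H] by simp
  qed
qed

lemma rat_relation_trivial:
  fixes H :: "nat \<Rightarrow> rat mpoly"
  assumes H: "\<forall>s<l. mpoly_in l (H s)" and rel: "\<And>j. (\<Sum>s<l. H s * of_int_mpoly (\<theta> s j)) = 0"
    and "s < l"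
  shows "H s = 0"
proof -
  obtain N :: int where "N > 0"
    and N: "\<And>s. s \<in> {..<l} \<Longrightarrow> of_int_mpoly (scaled_int_mpoly N (H s)) = mconst (of_int N) * H s"
    using rat_mpoly_common_denominator[of "{..<l}" H] by auto
  have rel_int: "(\<Sum>s<l. scaled_int_mpoly N (H s) * \<theta> s j) = 0" for j
  proof (rule of_int_mpoly_rat_inject)
    have "of_int_mpoly (\<Sum>s<l. scaled_int_mpoly N (H s) * \<theta> s j) =
        mconst (of_int N) * (\<Sum>s<l. H s * of_int_mpoly (\<theta> s j) :: rat mpoly)"
      by (simp add: of_int_mpoly_sum of_int_mpoly_mult N sum_distrib_left mult.assoc)
    then show "of_int_mpoly (\<Sum>s<l. scaled_int_mpoly N (H s) * \<theta> s j) = (of_int_mpoly 0 :: rat mpoly)"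
      by (simp add: rel)
  qed
  have "scaled_int_mpoly N (H s) = 0"
    by (rule int_relation_trivial[OF _ rel_int \<open>s < l\<close>]) (use H in \<open>auto intro: mpoly_in_scaled_int_mpoly\<close>)
  then have "mconst (of_int N) * H s = 0"
    using N[of s] \<open>s < l\<close> by simp
  then show ?thesis
    using \<open>N > 0\<close> by simp
qed

theorem free_with_exponents_rat: "free_with_exponents l D_rat e"
  unfolding free_with_exponents_def
proof (intro exI[of _ "\<lambda>s j. of_int_mpoly (\<theta> s j)"] conjI allI impI ballI)
  fix s
  assume "s < l"
  show "(\<lambda>j. of_int_mpoly (\<theta> s j)) \<in> D_rat"
    using lifted_in_D[OF \<open>s < l\<close>] by (rule Dmod_of_int_mpoly)
  show "homog_der (e s) (\<lambda>j. of_int_mpoly (\<theta> s j) :: rat mpoly)"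
    using lifted_homog[OF \<open>s < l\<close>] by (simp add: homog_der_iff homog_of_int_mpoly)
next
  fix \<delta> :: "nat \<Rightarrow> rat mpoly"
  assume "\<delta> \<in> D_rat"
  then obtain G where G: "\<forall>s<l. mpoly_in l (G s)" and \<delta>: "\<delta> = (\<lambda>j. \<Sum>s<l. G s * of_int_mpoly (\<theta> s j))"
    using Dmod_rat_in_rat_span unfolding rat_span_def by blast
  let ?g = "\<lambda>s. if s < l then G s else 0"
  show "\<exists>!g. (\<forall>s<l. mpoly_in l (g s)) \<and> (\<forall>s\<ge>l. g s = 0) \<and> \<delta> = (\<lambda>j. \<Sum>s<l. g s * of_int_mpoly (\<theta> s j))"
  proof (rule ex1I[of _ ?g])
    show "(\<forall>s<l. mpoly_in l (?g s)) \<and> (\<forall>s\<ge>l. ?g s = 0) \<and> \<delta> = (\<lambda>j. \<Sum>s<l. ?g s * of_int_mpoly (\<theta> s j))"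
      using G by (simp add: \<delta>)
    fix g
    assume g: "(\<forall>s<l. mpoly_in l (g s)) \<and> (\<forall>s\<ge>l. g s = 0) \<and> \<delta> = (\<lambda>j. \<Sum>s<l. g s * of_int_mpoly (\<theta> s j))"
    have "g s = G s" if "s < l" for s
    proof -
      have rel: "(\<Sum>s<l. (g s - G s) * of_int_mpoly (\<theta> s j)) = 0" for j
        using g fun_cong[OF \<delta>, of j] by (simp add: left_diff_distrib sum_subtractf)
      have "\<forall>s<l. mpoly_in l (g s - G s)"
        using g G by (simp add: mpoly_in_diff)
      then have "g s - G s = 0"
        using rel that by (rule rat_relation_trivial)
      then show ?thesis
        by simp
    qed
    then show "g = ?g"
      using g by (auto simp: fun_eq_iff)
  qed
qed

end

theorem theorem4p4:
  fixes l n :: nat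
    and a :: "nat \<Rightarrow> nat \<Rightarrow> int"
    and m :: "nat \<Rightarrow> nat"
    and e :: "nat \<Rightarrow> nat"
  assumes distinct_hyps: "\<forall>i<n. \<forall>j<n. i \<noteq> j \<longrightarrow> hyperplane_Q l (a i) \<noteq> hyperplane_Q l (a j)"
    and primitive: "\<forall>i<n. \<forall>q::int. prime q \<longrightarrow> \<not> (\<forall>k<l. q dvd a i k)"
    and good: "\<forall>i<n. \<forall>j<n. i \<noteq> j \<longrightarrow>
               (lin_form l (a i) :: 'p::prime_card mod_ring mpoly) \<noteq> lin_form l (a j)"
    and not_zd: "\<not> coker_zero_divisor l n a m (int CARD('p))"
    and free_p: "free_with_exponents l (Dmod l n a m :: (nat \<Rightarrow> 'p mod_ring mpoly) set) e"
  shows "free_with_exponents l (Dmod l n a m :: (nat \<Rightarrow> rat mpoly) set) e"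
proof -
  interpret good_reduction l n a m "TYPE('p)"
    using primitive not_zd by unfold_locales
  obtain \<theta> where lifted: "\<forall>s<l. \<theta> s \<in> D_int \<and> homog_der (e s) (\<theta> s)"
    and basis: "\<forall>\<delta>\<in>D_p. \<exists>!g. (\<forall>s<l. mpoly_in l (g s)) \<and> (\<forall>s\<ge>l. g s = 0) \<and>
           \<delta> = (\<lambda>j. \<Sum>s<l. g s * reduce (\<theta> s j))"
    using lift_basis[OF free_p] by blast
  interpret lifted_basis l n a m "TYPE('p)" e \<theta>
    by unfold_locales (use primitive not_zd lifted basis in simp_all)
  show ?thesis
    by (rule free_with_exponents_rat)
qed

end
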